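(* Let $\gamma$ be an $n\times m$ integer matrix satisfying conditions (i) and (ii) for the sign $-$, and let $A=\mathcal{A}(\gamma)^-$. For $g\in\mathbb{Z}^m$ put $|g|=\sum_{i=1}^m|g_i|$. Then $A_g\neq0$ if and only if there is a sequence $(i_1,\dots,i_N)$ with $N=|g|$ of elements of $\{1,\dots,m\}$ in which each $i$ occurs exactly $|g_i|$ times (so that the vectors $\mathrm{sgn}(g_{i_k})\gamma(\mathbf{e}_{i_k})$, $k=1,\dots,N$, form an $n$-dimensional vector composition of $\gamma(g)$), such that for every $r\in\{p+1,\dots,n\}$ the sequence $\big(\mathrm{sgn}(g_{i_1})\gamma_{ri_1},\dots,\mathrm{sgn}(g_{i_N})\gamma_{ri_N}\big)$ contains no block of consecutive entries of the form $(1,0,\dots,0,1)$ or $(-1,0,\dots,0,-1)$ (with zero or more $0$'s in between).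
   Context: $\Bbbk$ is an algebraically closed field of characteristic $0$. Fix $p,q\ge0$, $n=p+q$; $p(i)=0$ for $i\le p$, $p(i)=1$ for $i>p$. With the sign $-$: $\lambda_{ij}=(-1)^{p(i)p(j)}$, so $\lambda_{jj}=-1$ exactly for $j>p$; $R=\Bbbk[u_1,\dots,u_n]/(u_j^2-u_j\mid j>p)$; $\tau_i\in\mathrm{Aut}(R)$ with $\tau_i(u_i)=\lambda_{ii}(u_i-1)$, $\tau_i(u_j)=u_j$ ($j\ne i$). TGW algebras: for a TGW datum $(R,\sigma,t)$ (commuting automorphisms $\sigma_i$, central $t_i$) and nonzero scalars $\mu_{ij}$ ($i\ne j$), $\mathcal{A}_\mu(R,\sigma,t)$ is the quotient of the $R$-ring generated by $X_i,Y_i$ with relations $X_ir=\sigma_i(r)X_i$, $Y_ir=\sigma_i^{-1}(r)Y_i$, $Y_iX_i=t_i$, $X_iY_i=\sigma_i(t_i)$, $X_iY_j=\mu_{ij}Y_jX_i$ ($i\ne j$), graded by $\deg X_i=\mathbf{e}_i=-\deg Y_i$, $\deg R=0$, by the largest graded ideal meeting the degree-zero part trivially. The family $\mathcal{A}(\gamma)^-$: $\gamma=(\gamma_{ji})$ is an $n\times m$ integer matrix with (i) $|\gamma_{ji}|\le1$ whenever $\lambda_{jj}=-1$, and (ii) for all $i\ne i'$, either $\gamma_{ki}\gamma_{ki'}<0$ for some $k$ with $\lambda_{kk}=-1$, or $\gamma_{ki}\gamma_{ki'}\le0$ for all $k$. Then $\mathcal{A}(\gamma)^-=\mathcal{A}_\mu(R,\sigma,t)$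 with index set $\{1,\dots,m\}$, $\sigma_i=\tau_1^{\gamma_{1i}}\cdots\tau_n^{\gamma_{ni}}$, $t_i=\prod_{j=1}^nu_{ji}$ with $u_{ji}=(u_j+\gamma_{ji}-1)\cdots(u_j+1)u_j$ if $\gamma_{ji}>0$, $1$ if $\gamma_{ji}=0$, $(u_j-|\gamma_{ji}|)\cdots(u_j-1)$ if $\gamma_{ji}<0$; and $\mu_{ij}=(-1)^{\bar p(i)\bar p(j)}$ with $\bar p(i)=\sum_k\gamma_{ki}p(k)\bmod2$. $\gamma(\mathbf{e}_i)$ denotes the $i$-th column of $\gamma$, and $\mathrm{sgn}$ is the sign function. *)

theory Defs
  imports "HOL-Computational_Algebra.Polynomial"
begin

definition alg_closed_type :: "'k::field itself \<Rightarrow> bool" where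
  "alg_closed_type _ \<longleftrightarrow> (\<forall>P::'k poly. 0 < degree P \<longrightarrow> (\<exists>x. poly P x = 0))"

text \<open>R is realised as the ring of polynomial functions on the affine variety
  V = k^p x {0,1}^q (points v :: nat => k, coordinates 1..n, zero elsewhere);
  the ideal (u_j^2 - u_j | j>p) is radical with zero set V, so this is R.\<close>

definition Vset :: "nat \<Rightarrow> nat \<Rightarrow> (nat \<Rightarrow> 'k::field) set" where
  "Vset p n = {v. (\<forall>j. (j = 0 \<or> n < j) \<longrightarrow> v j = 0) \<and>
                  (\<forall>j. p < j \<and> j \<le> n \<longrightarrow> v j = 0 \<or> v j = 1)}"

inductive_set Pfun :: "nat \<Rightarrow> ((nat \<Rightarrow> 'k::field) \<Rightarrow> 'k) set" for n where
  const: "(\<lambda>v. c) \<in> Pfun n"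
| coord: "1 \<le> j \<Longrightarrow> j \<le> n \<Longrightarrow> (\<lambda>v. v j) \<in> Pfun n"
| add: "f \<in> Pfun n \<Longrightarrow> g \<in> Pfun n \<Longrightarrow> (\<lambda>v. f v + g v) \<in> Pfun n"
| mul: "f \<in> Pfun n \<Longrightarrow> g \<in> Pfun n \<Longrightarrow> (\<lambda>v. f v * g v) \<in> Pfun n"

definition onV :: "nat \<Rightarrow> nat \<Rightarrow> ((nat \<Rightarrow> 'k::field) \<Rightarrow> 'k) \<Rightarrow> ((nat \<Rightarrow> 'k) \<Rightarrow> 'k)" where
  "onV p n f = (\<lambda>v. if v \<in> Vset p n then f v else 0)"

definition Rset :: "nat \<Rightarrow> nat \<Rightarrow> ((nat \<Rightarrow> 'k::field) \<Rightarrow> 'k) set" where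
  "Rset p n = onV p n ` Pfun n"

definition uu :: "nat \<Rightarrow> nat \<Rightarrow> nat \<Rightarrow> ((nat \<Rightarrow> 'k::field) \<Rightarrow> 'k)" where
  "uu p n j = onV p n (\<lambda>v. v j)"

definition lam :: "nat \<Rightarrow> nat \<Rightarrow> 'k::field" where
  "lam p j = (if j \<le> p then 1 else -1)"

text \<open>tau_j: the automorphism with tau_j(u_j) = lambda_jj (u_j - 1), tau_j(u_k) = u_k;
  on polynomial functions it is precomposition with the corresponding map of V.\<close>
definition tau :: "nat \<Rightarrow> nat \<Rightarrow> nat \<Rightarrow> ((nat \<Rightarrow> 'k::field) \<Rightarrow> 'k) \<Rightarrow> ((nat \<Rightarrow> 'k) \<Rightarrow> 'k)" where
  "tau p n j f = onV p n (\<lambda>v. f (v(j := lam p j * (v j - 1))))"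

definition tau_inv :: "nat \<Rightarrow> nat \<Rightarrow> nat \<Rightarrow> ((nat \<Rightarrow> 'k::field) \<Rightarrow> 'k) \<Rightarrow> ((nat \<Rightarrow> 'k) \<Rightarrow> 'k)" where
  "tau_inv p n j = the_inv_into (Rset p n) (tau p n j)"

definition tau_pow :: "nat \<Rightarrow> nat \<Rightarrow> nat \<Rightarrow> int \<Rightarrow> ((nat \<Rightarrow> 'k::field) \<Rightarrow> 'k) \<Rightarrow> ((nat \<Rightarrow> 'k) \<Rightarrow> 'k)" where
  "tau_pow p n j k = (if 0 \<le> k then tau p n j ^^ nat k else tau_inv p n j ^^ nat (- k))"

definition sig :: "nat \<Rightarrow> nat \<Rightarrow> (nat \<Rightarrow> nat \<Rightarrow> int) \<Rightarrow> nat \<Rightarrow> ((nat \<Rightarrow> 'k::field) \<Rightarrow> 'k) \<Rightarrow> ((nat \<Rightarrow> 'k) \<Rightarrow> 'k)" where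
  "sig p n \<gamma> i = foldr (\<lambda>j acc. tau_pow p n j (\<gamma> j i) \<circ> acc) [1..<Suc n] id"

definition sig_inv :: "nat \<Rightarrow> nat \<Rightarrow> (nat \<Rightarrow> nat \<Rightarrow> int) \<Rightarrow> nat \<Rightarrow> ((nat \<Rightarrow> 'k::field) \<Rightarrow> 'k) \<Rightarrow> ((nat \<Rightarrow> 'k) \<Rightarrow> 'k)" where
  "sig_inv p n \<gamma> i = the_inv_into (Rset p n) (sig p n \<gamma> i)"

text \<open>u_{ji} as a polynomial in one variable evaluated at x, and t_i = prod_j u_{ji}.\<close>
definition ufac :: "int \<Rightarrow> 'k::field \<Rightarrow> 'k" where
  "ufac c x = (if 0 < c then (\<Prod>k<nat c. x + of_nat k)
               else if c < 0 then (\<Prod>k\<in>{1..nat (- c)}. x - of_nat k) else 1)"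

definition tt :: "nat \<Rightarrow> nat \<Rightarrow> (nat \<Rightarrow> nat \<Rightarrow> int) \<Rightarrow> nat \<Rightarrow> ((nat \<Rightarrow> 'k::field) \<Rightarrow> 'k)" where
  "tt p n \<gamma> i = onV p n (\<lambda>v. \<Prod>j\<in>{1..n}. ufac (\<gamma> j i) (v j))"

definition pbar :: "nat \<Rightarrow> nat \<Rightarrow> (nat \<Rightarrow> nat \<Rightarrow> int) \<Rightarrow> nat \<Rightarrow> int" where
  "pbar p n \<gamma> i = (\<Sum>k\<in>{p<..n}. \<gamma> k i) mod 2"

definition mu :: "nat \<Rightarrow> nat \<Rightarrow> (nat \<Rightarrow> nat \<Rightarrow> int) \<Rightarrow> nat \<Rightarrow> nat \<Rightarrow> 'k::field" where
  "mu p n \<gamma> i j = (-1) ^ nat (pbar p n \<gamma> i * pbar p n \<gamma> j)"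

text \<open>Letters: (True,i) is X_i, (False,i) is Y_i. An element of the R-ring freely
  generated by the X_i, Y_i subject only to X_i r = sigma_i(r) X_i, Y_i r = sigma_i^{-1}(r) Y_i
  is a finite R-linear combination r_w w of words w (R on the left).\<close>

type_synonym letter = "bool \<times> nat"
type_synonym 'k elt = "letter list \<Rightarrow> ((nat \<Rightarrow> 'k) \<Rightarrow> 'k)"

definition sig_letter :: "nat \<Rightarrow> nat \<Rightarrow> (nat \<Rightarrow> nat \<Rightarrow> int) \<Rightarrow> letter \<Rightarrow> ((nat \<Rightarrow> 'k::field) \<Rightarrow> 'k) \<Rightarrow> ((nat \<Rightarrow> 'k) \<Rightarrow> 'k)" where
  "sig_letter p n \<gamma> l = (if fst l then sig p n \<gamma> (snd l) else sig_inv p n \<gamma> (snd l))"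

definition sig_word :: "nat \<Rightarrow> nat \<Rightarrow> (nat \<Rightarrow> nat \<Rightarrow> int) \<Rightarrow> letter list \<Rightarrow> ((nat \<Rightarrow> 'k::field) \<Rightarrow> 'k) \<Rightarrow> ((nat \<Rightarrow> 'k) \<Rightarrow> 'k)" where
  "sig_word p n \<gamma> w = foldr (\<lambda>l acc. sig_letter p n \<gamma> l \<circ> acc) w id"

definition Fset :: "nat \<Rightarrow> nat \<Rightarrow> nat \<Rightarrow> 'k::field elt set" where
  "Fset p n m = {c. finite {w. c w \<noteq> (\<lambda>v. 0)} \<and> (\<forall>w. c w \<in> Rset p n) \<and>
                    (\<forall>w. c w \<noteq> (\<lambda>v. 0) \<longrightarrow> (\<forall>l\<in>set w. snd l \<in> {1..m}))}"

definition Fadd :: "'k::field elt \<Rightarrow> 'k elt \<Rightarrow> 'k elt" where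
  "Fadd a b = (\<lambda>w v. a w v + b w v)"

definition Fmul :: "nat \<Rightarrow> nat \<Rightarrow> (nat \<Rightarrow> nat \<Rightarrow> int) \<Rightarrow> 'k::field elt \<Rightarrow> 'k elt \<Rightarrow> 'k elt" where
  "Fmul p n \<gamma> a b = (\<lambda>w v. \<Sum>k\<in>{0..length w}.
       a (take k w) v * sig_word p n \<gamma> (take k w) (b (drop k w)) v)"

definition Fzero :: "'k::field elt" where
  "Fzero = (\<lambda>w v. 0)"

definition wdeg :: "letter list \<Rightarrow> nat \<Rightarrow> int" where
  "wdeg w = (\<lambda>i. int (length (filter (\<lambda>l. l = (True, i)) w)) - int (length (filter (\<lambda>l. l = (False, i)) w)))"

definition Fhom :: "nat \<Rightarrow> nat \<Rightarrow> nat \<Rightarrow> (nat \<Rightarrow> int) \<Rightarrow> 'k::field elt set" where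
  "Fhom p n m g = {c \<in> Fset p n m. \<forall>w. c w \<noteq> (\<lambda>v. 0) \<longrightarrow> wdeg w = g}"

definition hcomp :: "(nat \<Rightarrow> int) \<Rightarrow> 'k::field elt \<Rightarrow> 'k elt" where
  "hcomp g c = (\<lambda>w. if wdeg w = g then c w else (\<lambda>v. 0))"

definition oneR :: "nat \<Rightarrow> nat \<Rightarrow> (nat \<Rightarrow> 'k::field) \<Rightarrow> 'k" where
  "oneR p n = onV p n (\<lambda>v. 1)"

definition rels :: "nat \<Rightarrow> nat \<Rightarrow> nat \<Rightarrow> (nat \<Rightarrow> nat \<Rightarrow> int) \<Rightarrow> 'k::field elt set" where
  "rels p n m \<gamma> =
     {(\<lambda>w. if w = [(False, i), (True, i)] then oneR p n
           else if w = [] then (\<lambda>v. - tt p n \<gamma> i v) else (\<lambda>v. 0)) | i. i \<in> {1..m}}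
   \<union> {(\<lambda>w. if w = [(True, i), (False, i)] then oneR p n
           else if w = [] then (\<lambda>v. - sig p n \<gamma> i (tt p n \<gamma> i) v) else (\<lambda>v. 0)) | i. i \<in> {1..m}}
   \<union> {(\<lambda>w. if w = [(True, i), (False, j)] then oneR p n
           else if w = [(False, j), (True, i)] then (\<lambda>v. - mu p n \<gamma> i j * oneR p n v)
           else (\<lambda>v. 0)) | i j. i \<in> {1..m} \<and> j \<in> {1..m} \<and> i \<noteq> j}"

inductive_set Jgen :: "nat \<Rightarrow> nat \<Rightarrow> nat \<Rightarrow> (nat \<Rightarrow> nat \<Rightarrow> int) \<Rightarrow> 'k::field elt set"
  for p n m \<gamma> where
  rel: "r \<in> rels p n m \<gamma> \<Longrightarrow> r \<in> Jgen p n m \<gamma>"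
| zero: "Fzero \<in> Jgen p n m \<gamma>"
| add: "a \<in> Jgen p n m \<gamma> \<Longrightarrow> b \<in> Jgen p n m \<gamma> \<Longrightarrow> Fadd a b \<in> Jgen p n m \<gamma>"
| lmul: "c \<in> Fset p n m \<Longrightarrow> a \<in> Jgen p n m \<gamma> \<Longrightarrow> Fmul p n \<gamma> c a \<in> Jgen p n m \<gamma>"
| rmul: "c \<in> Fset p n m \<Longrightarrow> a \<in> Jgen p n m \<gamma> \<Longrightarrow> Fmul p n \<gamma> a c \<in> Jgen p n m \<gamma>"

definition graded_ideal :: "nat \<Rightarrow> nat \<Rightarrow> nat \<Rightarrow> (nat \<Rightarrow> nat \<Rightarrow> int) \<Rightarrow> 'k::field elt set \<Rightarrow> bool" where
  "graded_ideal p n m \<gamma> K \<longleftrightarrow> K \<subseteq> Fset p n m \<and> Fzero \<in> K \<and>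
     (\<forall>a\<in>K. \<forall>b\<in>K. Fadd a b \<in> K) \<and>
     (\<forall>c\<in>Fset p n m. \<forall>a\<in>K. Fmul p n \<gamma> c a \<in> K \<and> Fmul p n \<gamma> a c \<in> K) \<and>
     (\<forall>a\<in>K. \<forall>g. hcomp g a \<in> K)"

text \<open>Graded ideals of the presented R-ring C = F/J meeting C_0 trivially correspond to
  graded ideals K of F with J \<subseteq> K and K \<inter> F_0 \<subseteq> J. The largest one is their union.\<close>
definition admissible :: "nat \<Rightarrow> nat \<Rightarrow> nat \<Rightarrow> (nat \<Rightarrow> nat \<Rightarrow> int) \<Rightarrow> 'k::field elt set \<Rightarrow> bool" where
  "admissible p n m \<gamma> K \<longleftrightarrow> graded_ideal p n m \<gamma> K \<and> Jgen p n m \<gamma> \<subseteq> K \<and>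
     K \<inter> Fhom p n m (\<lambda>i. 0) \<subseteq> Jgen p n m \<gamma>"

definition Imax :: "nat \<Rightarrow> nat \<Rightarrow> nat \<Rightarrow> (nat \<Rightarrow> nat \<Rightarrow> int) \<Rightarrow> 'k::field elt set" where
  "Imax p n m \<gamma> = \<Union>{K. admissible p n m \<gamma> K}"

text \<open>A_g \<noteq> 0 for A = A(gamma)^- over the field 'k: the degree g component of F is not
  contained in the ideal whose quotient is A.\<close>
definition A_comp_nonzero :: "'k::field itself \<Rightarrow> nat \<Rightarrow> nat \<Rightarrow> nat \<Rightarrow> (nat \<Rightarrow> nat \<Rightarrow> int) \<Rightarrow> (nat \<Rightarrow> int) \<Rightarrow> bool" where
  "A_comp_nonzero _ p n m \<gamma> g \<longleftrightarrow> \<not> ((Fhom p n m g :: 'k elt set) \<subseteq> Imax p n m \<gamma>)"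

definition gamma_cond_minus :: "nat \<Rightarrow> nat \<Rightarrow> nat \<Rightarrow> (nat \<Rightarrow> nat \<Rightarrow> int) \<Rightarrow> bool" where
  "gamma_cond_minus p n m \<gamma> \<longleftrightarrow>
     (\<forall>j\<in>{p<..n}. \<forall>i\<in>{1..m}. \<bar>\<gamma> j i\<bar> \<le> 1) \<and>
     (\<forall>i\<in>{1..m}. \<forall>i'\<in>{1..m}. i \<noteq> i' \<longrightarrow>
        (\<exists>k\<in>{p<..n}. \<gamma> k i * \<gamma> k i' < 0) \<or> (\<forall>k\<in>{1..n}. \<gamma> k i * \<gamma> k i' \<le> 0))"

definition no_bad_block :: "int list \<Rightarrow> bool" where
  "no_bad_block a \<longleftrightarrow> \<not> (\<exists>k l. k < l \<and> l < length a \<and> a ! k = a ! l \<and> (a ! k = 1 \<or> a ! k = -1) \<and>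
                              (\<forall>j. k < j \<and> j < l \<longrightarrow> a ! j = 0))"

end

theory Submission
  imports Defs
begin

text \<open>The free \<open>R\<close>-ring on the \<open>X\<^sub>i\<close>, \<open>Y\<^sub>i\<close> acts on functions \<open>V \<times> \<int>\<^sup>m \<rightarrow> k\<close>, where \<open>V\<close> is the
  variety of \<open>R\<close>: each letter shifts the point by \<open>\<plusminus>\<gamma>(e\<^sub>i)\<close> and the degree by \<open>\<plusminus>e\<^sub>i\<close>, with a
  coefficient chosen so that all defining relations act by zero. The kernel of this action is
  therefore a graded ideal containing the relations, and it meets degree zero only in the
  relations, since modulo the relations every element of degree zero is a coefficient \<open>r \<in> R\<close>,
  which acts by multiplication with \<open>r\<close>. Hence the kernel lies in the maximal such ideal.

  Modulo the relations, \<open>X\<^sub>i\<close> and \<open>Y\<^sub>j\<close> (\<open>i \<noteq> j\<close>) skew-commute and \<open>X\<^sub>iY\<^sub>i\<close>, \<open>Y\<^sub>iX\<^sub>i\<close> are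
  coefficients, so every element of degree \<open>g\<close> is congruent to a combination of reduced words
  (no index occurring with both letters), whose index sequences have each \<open>i\<close> exactly \<open>|g\<^sub>i|\<close>
  times. Along a word, an odd coordinate \<open>y\<^sub>r \<in> {0, 1}\<close> is flipped by every letter with entry
  \<open>\<plusminus>1\<close> in row \<open>r\<close>, and the coefficient vanishes unless \<open>+1\<close> meets \<open>y\<^sub>r = 0\<close> and \<open>-1\<close> meets
  \<open>y\<^sub>r = 1\<close>; so a word acts nontrivially only if these entries alternate in sign, i.e. the row
  has no bad block. Without a good sequence, \<open>A\<^sub>g\<close> thus lies in the kernel. Conversely, for the
  word \<open>w\<close> of a good sequence, \<open>w\<^sup>*w\<close> has degree zero and acts nontrivially at a suitable point,
  so it is not a relation, and \<open>w\<close> cannot lie in the maximal ideal.\<close>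

section \<open>The ring \<open>R\<close> and the automorphisms \<open>\<sigma>\<^sub>i\<close> as shifts of \<open>V\<close>\<close>

text \<open>On \<open>V\<close>, \<open>\<tau>\<^sub>j\<^sup>c\<close> moves the \<open>j\<close>-th coordinate by \<open>x \<mapsto> x - c\<close> for \<open>j \<le> p\<close>, and for \<open>j > p\<close>
  by \<open>x \<mapsto> 1 - x\<close> (an involution of \<open>{0,1}\<close>) when \<open>c\<close> is odd.\<close>

definition shift_coord :: "nat \<Rightarrow> nat \<Rightarrow> int \<Rightarrow> 'k::field \<Rightarrow> 'k" where
  "shift_coord p j c x = (if j \<le> p then x - of_int c else if even c then x else 1 - x)"

definition shift_point :: "nat \<Rightarrow> nat \<Rightarrow> (nat \<Rightarrow> int) \<Rightarrow> (nat \<Rightarrow> 'k::field) \<Rightarrow> (nat \<Rightarrow> 'k)" where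
  "shift_point p n c v = (\<lambda>j. if 1 \<le> j \<and> j \<le> n then shift_coord p j (c j) (v j) else v j)"

definition pullback :: "nat \<Rightarrow> nat \<Rightarrow> (nat \<Rightarrow> int) \<Rightarrow> ((nat \<Rightarrow> 'k::field) \<Rightarrow> 'k) \<Rightarrow> ((nat \<Rightarrow> 'k) \<Rightarrow> 'k)" where
  "pullback p n c r = onV p n (\<lambda>v. r (shift_point p n c v))"

lemma shift_coord_add: "shift_coord p j a (shift_coord p j b x) = shift_coord p j (b + a) (x::'k::field)"
  by (auto simp: shift_coord_def algebra_simps)

lemma shift_coord_0 [simp]: "shift_coord p j 0 x = x"
  by (simp add: shift_coord_def)

lemma shift_point_0 [simp]: "shift_point p n (\<lambda>j. 0) v = v"
  by (auto simp: shift_point_def)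

lemma shift_point_add: "shift_point p n a (shift_point p n b v) = shift_point p n (\<lambda>j. b j + a j) v"
  by (auto simp: shift_point_def shift_coord_add)

lemma shift_point_cong:
  "(\<And>j. 1 \<le> j \<Longrightarrow> j \<le> n \<Longrightarrow> a j = b j) \<Longrightarrow> shift_point p n a v = shift_point p n b v"
  by (auto simp: shift_point_def)

lemma shift_point_Vset: "v \<in> Vset p n \<Longrightarrow> shift_point p n c v \<in> Vset p n"
  by (auto simp: Vset_def shift_point_def shift_coord_def)

lemma shift_point_Vset_iff: "shift_point p n c v \<in> Vset p n \<longleftrightarrow> v \<in> Vset p n"
  using shift_point_Vset[of "shift_point p n c v" p n "\<lambda>j. - c j"] shift_point_Vset[of v p n c]
  by (auto simp: shift_point_add)

lemma Rset_vanish: "r \<in> Rset p n \<Longrightarrow> v \<notin> Vset p n \<Longrightarrow> r v = 0"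
  by (auto simp: Rset_def onV_def)

lemma onV_Rset: "r \<in> Rset p n \<Longrightarrow> onV p n r = r"
  by (auto simp: Rset_def onV_def)

lemma onV_in_Rset: "f \<in> Pfun n \<Longrightarrow> onV p n f \<in> Rset p n"
  by (simp add: Rset_def)

lemma Rset_add: "r \<in> Rset p n \<Longrightarrow> s \<in> Rset p n \<Longrightarrow> (\<lambda>v. r v + s v) \<in> Rset p n"
proof -
  assume "r \<in> Rset p n" "s \<in> Rset p n"
  then obtain f g where "f \<in> Pfun n" "r = onV p n f" "g \<in> Pfun n" "s = onV p n g"
    by (auto simp: Rset_def)
  moreover have "(\<lambda>v. r v + s v) = onV p n (\<lambda>v. f v + g v)" using calculation by (auto simp: onV_def)
  ultimately show ?thesis by (simp add: onV_in_Rset Pfun.add)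
qed

lemma Rset_mul: "r \<in> Rset p n \<Longrightarrow> s \<in> Rset p n \<Longrightarrow> (\<lambda>v. r v * s v) \<in> Rset p n"
proof -
  assume "r \<in> Rset p n" "s \<in> Rset p n"
  then obtain f g where "f \<in> Pfun n" "r = onV p n f" "g \<in> Pfun n" "s = onV p n g"
    by (auto simp: Rset_def)
  moreover have "(\<lambda>v. r v * s v) = onV p n (\<lambda>v. f v * g v)" using calculation by (auto simp: onV_def)
  ultimately show ?thesis by (simp add: onV_in_Rset Pfun.mul)
qed

lemma Rset_const: "(\<lambda>v. c * oneR p n v) \<in> Rset p n"
proof -
  have "(\<lambda>v. c * oneR p n v) = onV p n (\<lambda>v. c)" by (auto simp: oneR_def onV_def)
  then show ?thesis by (simp add: onV_in_Rset Pfun.const)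
qed

lemma oneR_apply: "oneR p n v = (if v \<in> Vset p n then 1 else 0)"
  by (simp add: oneR_def onV_def)

lemma Rset_oneR: "oneR p n \<in> Rset p n"
  using Rset_const[of 1 p n] by simp

lemma Rset_zero: "(\<lambda>v. 0) \<in> Rset p n"
  using Rset_const[of 0 p n] by simp

lemma Rset_mul_oneR: "r \<in> Rset p n \<Longrightarrow> r v * oneR p n v = r v"
  by (cases "v \<in> Vset p n") (auto simp: oneR_def onV_def Rset_vanish)

lemma Rset_oneR_mul: "r \<in> Rset p n \<Longrightarrow> oneR p n v * r v = r v"
  by (cases "v \<in> Vset p n") (auto simp: oneR_def onV_def Rset_vanish)

lemma Rset_smul: "r \<in> Rset p n \<Longrightarrow> (\<lambda>v. c * r v) \<in> Rset p n"
  using Rset_mul[OF Rset_const, of r p n c] by (simp add: Rset_oneR_mul mult.assoc)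

lemma Rset_neg: "r \<in> Rset p n \<Longrightarrow> (\<lambda>v. - r v) \<in> Rset p n"
  using Rset_smul[of r p n "-1"] by simp

lemma Rset_sum:
  "finite K \<Longrightarrow> (\<And>k. k \<in> K \<Longrightarrow> f k \<in> Rset p n) \<Longrightarrow> (\<lambda>v. \<Sum>k\<in>K. f k v) \<in> Rset p n"
  by (induction K rule: finite_induct) (simp_all add: Rset_zero Rset_add)

lemma Pfun_shift_coord: "1 \<le> j \<Longrightarrow> j \<le> n \<Longrightarrow> (\<lambda>v. shift_coord p j c (v j)) \<in> Pfun n"
proof -
  assume j: "1 \<le> j" "j \<le> n"
  have x: "(\<lambda>v. v j) \<in> Pfun n" using j by (rule Pfun.coord)
  have "(\<lambda>v. v j + (- of_int c)) \<in> Pfun n" by (rule Pfun.add[OF x Pfun.const])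
  moreover have "(\<lambda>v. 1 + (-1) * v j) \<in> Pfun n" by (rule Pfun.add[OF Pfun.const Pfun.mul[OF Pfun.const x]])
  ultimately show ?thesis using x by (cases "j \<le> p"; cases "even c") (simp_all add: shift_coord_def)
qed

lemma Pfun_shift_point: "f \<in> Pfun n \<Longrightarrow> (\<lambda>v. f (shift_point p n c v)) \<in> Pfun n"
  by (induction rule: Pfun.induct)
     (simp_all add: Pfun.const Pfun.add Pfun.mul shift_point_def Pfun_shift_coord)

lemma pullback_Rset: "r \<in> Rset p n \<Longrightarrow> pullback p n c r \<in> Rset p n"
proof -
  assume "r \<in> Rset p n"
  then obtain f where f: "f \<in> Pfun n" "r = onV p n f" by (auto simp: Rset_def)
  have "pullback p n c r = onV p n (\<lambda>v. f (shift_point p n c v))"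
    using f by (auto simp: pullback_def onV_def shift_point_Vset_iff)
  then show ?thesis using f Pfun_shift_point onV_in_Rset by metis
qed

lemma pullback_at: "v \<in> Vset p n \<Longrightarrow> pullback p n c r v = r (shift_point p n c v)"
  by (simp add: pullback_def onV_def)

lemma pullback_pullback:
  "r \<in> Rset p n \<Longrightarrow> pullback p n a (pullback p n b r) = pullback p n (\<lambda>j. a j + b j) r"
  by (auto simp: pullback_def onV_def shift_point_Vset_iff shift_point_add add.commute)

lemma pullback_0: "r \<in> Rset p n \<Longrightarrow> pullback p n (\<lambda>j. 0) r = r"
  by (simp add: pullback_def shift_point_def onV_Rset)

lemma pullback_cong:
  "(\<And>j. 1 \<le> j \<Longrightarrow> j \<le> n \<Longrightarrow> a j = b j) \<Longrightarrow> pullback p n a r = pullback p n b r"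
  by (simp add: pullback_def shift_point_cong[of n a b])

lemma inj_on_pullback: "inj_on (pullback p n c) (Rset p n :: ((nat \<Rightarrow> 'k::field) \<Rightarrow> 'k) set)"
proof (rule inj_onI)
  fix r s :: "(nat \<Rightarrow> 'k) \<Rightarrow> 'k"
  assume r: "r \<in> Rset p n" and s: "s \<in> Rset p n" and eq: "pullback p n c r = pullback p n c s"
  have "pullback p n (\<lambda>j. - c j) (pullback p n c r) = pullback p n (\<lambda>j. - c j) (pullback p n c s)"
    using eq by simp
  then show "r = s" using r s by (simp add: pullback_pullback pullback_0)
qed

lemma the_inv_pullback:
  "r \<in> Rset p n \<Longrightarrow> the_inv_into (Rset p n) (pullback p n c) r = pullback p n (\<lambda>j. - c j) r"
  by (rule the_inv_into_f_eq[OF inj_on_pullback]) (simp_all add: pullback_pullback pullback_0 pullback_Rset)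

lemma pullback_add: "pullback p n c (\<lambda>v. r v + s v) = (\<lambda>v. pullback p n c r v + pullback p n c s v)"
  by (auto simp: pullback_def onV_def)

lemma pullback_smul: "pullback p n c (\<lambda>v. a * r v) = (\<lambda>v. a * pullback p n c r v)"
  by (auto simp: pullback_def onV_def)

lemma pullback_oneR: "pullback p n c (oneR p n) = oneR p n"
  by (auto simp: pullback_def onV_def oneR_def shift_point_Vset_iff)

lemma pullback_zero: "pullback p n c (\<lambda>v. 0) = (\<lambda>v. 0)"
  by (auto simp: pullback_def onV_def)

definition coord_vec :: "nat \<Rightarrow> int \<Rightarrow> nat \<Rightarrow> int" where
  "coord_vec j k = (\<lambda>l. if l = j then k else 0)"

lemma tau_eq_pullback:
  "1 \<le> j \<Longrightarrow> j \<le> n \<Longrightarrow> (tau p n j :: ((nat \<Rightarrow> 'k::field) \<Rightarrow> 'k) \<Rightarrow> _) = pullback p n (coord_vec j 1)"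
proof -
  assume j: "1 \<le> j" "j \<le> n"
  have "v(j := lam p j * (v j - 1)) = shift_point p n (coord_vec j 1) (v::nat \<Rightarrow> 'k)" for v
    using j by (auto simp: shift_point_def coord_vec_def shift_coord_def lam_def)
  then show ?thesis by (intro ext) (simp add: tau_def pullback_def)
qed

lemma tau_pow_eq_pullback:
  assumes j: "1 \<le> j" "j \<le> n" and r: "r \<in> Rset p n"
  shows "tau_pow p n j k r = pullback p n (coord_vec j k) r"
proof -
  have step: "pullback p n (coord_vec j a) (pullback p n (coord_vec j b) r) = pullback p n (coord_vec j (a + b)) r" for a b
    using r by (simp add: pullback_pullback coord_vec_def if_distrib cong: if_cong)
  have base: "r = pullback p n (coord_vec j 0) r"
    using r by (simp add: coord_vec_def pullback_0 cong: if_cong)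
  have pos: "(tau p n j ^^ c) r = pullback p n (coord_vec j (int c)) r" for c
  proof (induction c)
    case (Suc c)
    have "(tau p n j ^^ Suc c) r = tau p n j (pullback p n (coord_vec j (int c)) r)"
      using Suc by simp
    also have "\<dots> = pullback p n (coord_vec j 1) (pullback p n (coord_vec j (int c)) r)"
      by (simp add: tau_eq_pullback[OF j])
    finally show ?case by (simp add: step add.commute)
  qed (use base in simp)
  have inv: "tau_inv p n j s = pullback p n (coord_vec j (-1)) s" if "s \<in> Rset p n" for s
    using the_inv_pullback[OF that, of "coord_vec j 1"]
    by (simp add: tau_inv_def tau_eq_pullback[OF j] coord_vec_def if_distrib cong: if_cong)
  have neg: "(tau_inv p n j ^^ c) r = pullback p n (coord_vec j (- int c)) r" for c
  proof (induction c)
    case (Suc c)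
    then show ?case
      using inv[OF pullback_Rset[OF r]] step[of "-1" "- int c"] by simp
  qed (use base in simp)
  show ?thesis
    using pos[of "nat k"] neg[of "nat (- k)"] by (simp add: tau_pow_def)
qed

definition column :: "(nat \<Rightarrow> nat \<Rightarrow> int) \<Rightarrow> nat \<Rightarrow> nat \<Rightarrow> int" where
  "column \<gamma> i = (\<lambda>j. \<gamma> j i)"

lemma foldr_tau_pow_eq_pullback:
  assumes "set L \<subseteq> {1..n}" "distinct L" "r \<in> Rset p n"
  shows "foldr (\<lambda>j acc. tau_pow p n j (\<gamma> j i) \<circ> acc) L id r
           = pullback p n (\<lambda>j. if j \<in> set L then \<gamma> j i else 0) r"
  using assms
proof (induction L)
  case Nil
  then show ?case by (simp add: pullback_0)
next
  case (Cons j L)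
  have IH: "foldr (\<lambda>j acc. tau_pow p n j (\<gamma> j i) \<circ> acc) L id r
      = pullback p n (\<lambda>j. if j \<in> set L then \<gamma> j i else 0) r"
    using Cons.prems by (intro Cons.IH) auto
  have "foldr (\<lambda>j acc. tau_pow p n j (\<gamma> j i) \<circ> acc) (j # L) id r
      = tau_pow p n j (\<gamma> j i) (pullback p n (\<lambda>j. if j \<in> set L then \<gamma> j i else 0) r)"
    by (simp flip: IH)
  also have "\<dots> = pullback p n (coord_vec j (\<gamma> j i)) (pullback p n (\<lambda>j. if j \<in> set L then \<gamma> j i else 0) r)"
    using Cons.prems by (intro tau_pow_eq_pullback pullback_Rset) auto
  also have "\<dots> = pullback p n (\<lambda>l. if l \<in> set (j # L) then \<gamma> l i else 0) r"
    using Cons.prems by (auto simp: pullback_pullback coord_vec_def intro!: pullback_cong)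
  finally show ?case .
qed

lemma sig_eq_pullback: "r \<in> Rset p n \<Longrightarrow> sig p n \<gamma> i r = pullback p n (column \<gamma> i) r"
  unfolding sig_def by (subst foldr_tau_pow_eq_pullback) (auto simp: column_def intro!: pullback_cong)

lemma sig_inv_eq_pullback: "r \<in> Rset p n \<Longrightarrow> sig_inv p n \<gamma> i r = pullback p n (\<lambda>j. - column \<gamma> i j) r"
proof -
  have "inj_on (sig p n \<gamma> i) (Rset p n)"
    using inj_on_pullback[of p n "column \<gamma> i"] by (simp add: inj_on_def sig_eq_pullback)
  then show "r \<in> Rset p n \<Longrightarrow> ?thesis"
    unfolding sig_inv_def
    by (rule the_inv_into_f_eq) (simp_all add: sig_eq_pullback pullback_pullback pullback_0 pullback_Rset)
qed

definition letter_shift :: "(nat \<Rightarrow> nat \<Rightarrow> int) \<Rightarrow> letter \<Rightarrow> nat \<Rightarrow> int" where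
  "letter_shift \<gamma> l = (if fst l then column \<gamma> (snd l) else (\<lambda>j. - column \<gamma> (snd l) j))"

fun word_shift :: "(nat \<Rightarrow> nat \<Rightarrow> int) \<Rightarrow> letter list \<Rightarrow> nat \<Rightarrow> int" where
  "word_shift \<gamma> [] = (\<lambda>j. 0)"
| "word_shift \<gamma> (l # w) = (\<lambda>j. letter_shift \<gamma> l j + word_shift \<gamma> w j)"

lemma word_shift_append: "word_shift \<gamma> (u @ v) = (\<lambda>j. word_shift \<gamma> u j + word_shift \<gamma> v j)"
  by (induction u) (auto simp: algebra_simps)

lemma letter_shift_simps [simp]:
  "letter_shift \<gamma> (True, i) j = \<gamma> j i" "letter_shift \<gamma> (False, i) j = - \<gamma> j i"
  by (simp_all add: letter_shift_def column_def)

lemma sig_word_eq_pullback: "r \<in> Rset p n \<Longrightarrow> sig_word p n \<gamma> w r = pullback p n (word_shift \<gamma> w) r"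
proof (induction w)
  case Nil
  then show ?case by (simp add: sig_word_def pullback_0)
next
  case (Cons l w)
  have "sig_word p n \<gamma> (l # w) r = sig_letter p n \<gamma> l (pullback p n (word_shift \<gamma> w) r)"
    using Cons by (simp add: sig_word_def)
  also have "\<dots> = pullback p n (letter_shift \<gamma> l) (pullback p n (word_shift \<gamma> w) r)"
    using pullback_Rset[OF Cons.prems]
    by (simp add: sig_letter_def letter_shift_def sig_eq_pullback sig_inv_eq_pullback)
  finally have "sig_word p n \<gamma> (l # w) r = pullback p n (letter_shift \<gamma> l) (pullback p n (word_shift \<gamma> w) r)" .
  with Cons.prems show ?case
    by (simp add: pullback_pullback)
qed

lemma sig_word_Rset: "r \<in> Rset p n \<Longrightarrow> sig_word p n \<gamma> w r \<in> Rset p n"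
  by (simp add: sig_word_eq_pullback pullback_Rset)

lemma sig_word_Nil: "sig_word p n \<gamma> [] r = r"
  by (simp add: sig_word_def)

lemma sig_word_zero: "sig_word p n \<gamma> u (\<lambda>v. 0) = (\<lambda>v. 0)"
  by (simp add: sig_word_eq_pullback Rset_zero pullback_zero)

lemma sig_word_oneR: "sig_word p n \<gamma> u (oneR p n) = oneR p n"
  by (simp add: sig_word_eq_pullback Rset_oneR pullback_oneR)

lemma sig_word_add: "a \<in> Rset p n \<Longrightarrow> b \<in> Rset p n \<Longrightarrow>
  sig_word p n \<gamma> u (\<lambda>x. a x + b x) = (\<lambda>x. sig_word p n \<gamma> u a x + sig_word p n \<gamma> u b x)"
  by (simp add: sig_word_eq_pullback Rset_add pullback_add)

lemma sig_word_smul: "a \<in> Rset p n \<Longrightarrow>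
  sig_word p n \<gamma> u (\<lambda>x. c * a x) = (\<lambda>x. c * sig_word p n \<gamma> u a x)"
  by (simp add: sig_word_eq_pullback Rset_smul pullback_smul)

lemma ufac_pos: "0 < c \<Longrightarrow> ufac c x = pochhammer x (nat c)"
  by (simp add: ufac_def pochhammer_prod atLeast0LessThan)

lemma ufac_neg: "c < 0 \<Longrightarrow> ufac c (x::'k::field) = pochhammer (x + of_int c) (nat (- c))"
proof -
  assume c: "c < 0"
  define C where "C = nat (- c)"
  have "ufac c x = (\<Prod>k\<in>{1..C}. x - of_nat k)" using c by (simp add: ufac_def C_def)
  also have "\<dots> = (\<Prod>i\<in>{0..<C}. x - of_nat C + of_nat i)"
    by (rule prod.reindex_bij_witness[where i = "\<lambda>i. C - i" and j = "\<lambda>k. C - k"]) (auto simp: of_nat_diff)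
  also have "\<dots> = pochhammer (x + of_int c) C" using c by (simp add: pochhammer_prod C_def)
  finally show ?thesis by (simp add: C_def)
qed

lemma ufac_0 [simp]: "ufac 0 x = 1"
  by (simp add: ufac_def)

lemma Pfun_prod: "finite K \<Longrightarrow> (\<And>k. k \<in> K \<Longrightarrow> f k \<in> Pfun n) \<Longrightarrow> (\<lambda>v. \<Prod>k\<in>K. f k v) \<in> Pfun n"
  by (induction K rule: finite_induct) (simp_all add: Pfun.const Pfun.mul)

lemma Pfun_ufac: "1 \<le> j \<Longrightarrow> j \<le> n \<Longrightarrow> (\<lambda>v::nat \<Rightarrow> 'k::field. ufac c (v j)) \<in> Pfun n"
proof -
  assume "1 \<le> j" "j \<le> n"
  then have x: "(\<lambda>v. v j + a) \<in> Pfun n" for a :: 'k by (intro Pfun.add Pfun.coord Pfun.const)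
  have "(\<lambda>v::nat \<Rightarrow> 'k. \<Prod>k<nat c. v j + of_nat k) \<in> Pfun n"
    by (rule Pfun_prod) (simp_all add: x)
  moreover have "(\<lambda>v::nat \<Rightarrow> 'k. \<Prod>k\<in>{1..nat (-c)}. v j + (- of_nat k)) \<in> Pfun n"
    by (rule Pfun_prod) (simp_all only: x finite_atLeastAtMost)
  ultimately show ?thesis by (cases "0 < c"; cases "c < 0") (simp_all add: ufac_def Pfun.const)
qed

lemma tt_Rset: "tt p n \<gamma> i \<in> Rset p n"
  unfolding tt_def by (intro onV_in_Rset Pfun_prod Pfun_ufac) auto

definition support :: "'k::field elt \<Rightarrow> letter list set" where
  "support c = {w. c w \<noteq> (\<lambda>v. 0)}"

definition scaled_word :: "((nat \<Rightarrow> 'k::field) \<Rightarrow> 'k) \<Rightarrow> letter list \<Rightarrow> 'k elt" where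
  "scaled_word r w = (\<lambda>w'. if w' = w then r else (\<lambda>v. 0))"

definition Fneg :: "'k::field elt \<Rightarrow> 'k elt" where
  "Fneg a = (\<lambda>w v. - a w v)"

definition word_over :: "nat \<Rightarrow> letter list \<Rightarrow> bool" where
  "word_over m w \<longleftrightarrow> (\<forall>l\<in>set w. snd l \<in> {1..m})"

lemma word_over_simps [simp]:
  "word_over m []"
  "word_over m (l # u) \<longleftrightarrow> snd l \<in> {1..m} \<and> word_over m u"
  "word_over m (u @ v) \<longleftrightarrow> word_over m u \<and> word_over m v"
  by (auto simp: word_over_def)

lemma finite_support: "c \<in> Fset p n m \<Longrightarrow> finite (support c)"
  by (simp add: Fset_def support_def)

lemma support_scaled_word: "support (scaled_word r w) \<subseteq> {w}"
  by (auto simp: support_def scaled_word_def)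

lemma support_Fzero: "support Fzero = {}"
  by (simp add: support_def Fzero_def)

lemma support_Fadd: "support (Fadd a b) \<subseteq> support a \<union> support b"
  by (auto simp: support_def Fadd_def)

lemma support_Fmul:
  "support (Fmul p n \<gamma> a b) \<subseteq> (\<lambda>(u, v). u @ v) ` (support a \<times> support b)"
proof
  fix w assume "w \<in> support (Fmul p n \<gamma> a b)"
  then obtain y where "(\<Sum>k\<in>{0..length w}. a (take k w) y * sig_word p n \<gamma> (take k w) (b (drop k w)) y) \<noteq> 0"
    by (auto simp: support_def Fmul_def)
  then obtain k where "a (take k w) y * sig_word p n \<gamma> (take k w) (b (drop k w)) y \<noteq> 0"
    using sum.not_neutral_contains_not_neutral by blast
  then have "take k w \<in> support a" "drop k w \<in> support b"
    by (auto simp: support_def sig_word_zero)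
  then show "w \<in> (\<lambda>(u, v). u @ v) ` (support a \<times> support b)"
    by (metis (no_types, lifting) append_take_drop_id image_eqI mem_Sigma_iff case_prod_conv)
qed

lemma scaled_word_Fset: "r \<in> Rset p n \<Longrightarrow> word_over m w \<Longrightarrow> scaled_word r w \<in> Fset p n m"
  using finite_subset[OF support_scaled_word[of r w]]
  by (auto simp: Fset_def scaled_word_def word_over_def support_def Rset_zero)

lemma Fzero_Fset: "Fzero \<in> Fset p n m"
  by (simp add: Fset_def Fzero_def Rset_zero)

lemma Fset_remove: "c \<in> Fset p n m \<Longrightarrow> c(w := (\<lambda>v. 0)) \<in> Fset p n m"
proof -
  have "{w'. (c(w := (\<lambda>v. 0))) w' \<noteq> (\<lambda>v. 0)} \<subseteq> {w'. c w' \<noteq> (\<lambda>v. 0)}" by auto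
  then show "c \<in> Fset p n m \<Longrightarrow> ?thesis" by (auto simp: Fset_def Rset_zero intro: finite_subset)
qed

lemma Fadd_Fset: "a \<in> Fset p n m \<Longrightarrow> b \<in> Fset p n m \<Longrightarrow> Fadd a b \<in> Fset p n m"
proof -
  assume a: "a \<in> Fset p n m" and b: "b \<in> Fset p n m"
  have "finite (support (Fadd a b))"
    using finite_subset[OF support_Fadd] finite_support[OF a] finite_support[OF b] by blast
  moreover have "Fadd a b w \<in> Rset p n" for w
    using a b by (simp add: Fadd_def Fset_def Rset_add)
  moreover have "snd l \<in> {1..m}" if "w \<in> support (Fadd a b)" "l \<in> set w" for w l
  proof -
    have "w \<in> support a \<or> w \<in> support b" using that(1) support_Fadd by blast
    then show ?thesis using a b that(2) by (auto simp: Fset_def support_def)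
  qed
  ultimately show ?thesis by (auto simp: Fset_def support_def)
qed

lemma Fneg_Fset: "a \<in> Fset p n m \<Longrightarrow> Fneg a \<in> Fset p n m"
  by (auto simp: Fset_def Fneg_def Rset_neg fun_eq_iff)

lemma Fmul_Fset: "a \<in> Fset p n m \<Longrightarrow> b \<in> Fset p n m \<Longrightarrow> Fmul p n \<gamma> a b \<in> Fset p n m"
proof -
  assume a: "a \<in> Fset p n m" and b: "b \<in> Fset p n m"
  note s = support_Fmul[of p n \<gamma> a b]
  have "finite (support (Fmul p n \<gamma> a b))"
    using a b s by (meson finite_support finite_SigmaI finite_imageI finite_subset)
  moreover have "Fmul p n \<gamma> a b w \<in> Rset p n" for w
    unfolding Fmul_def using a b by (intro Rset_sum Rset_mul) (auto simp: Fset_def sig_word_Rset)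
  moreover have "snd l \<in> {1..m}" if "w \<in> support (Fmul p n \<gamma> a b)" "l \<in> set w" for w l
  proof -
    have "w \<in> (\<lambda>(u, v). u @ v) ` (support a \<times> support b)" using s that(1) ..
    then obtain u v where "w = u @ v" "u \<in> support a" "v \<in> support b" by auto
    then show ?thesis using a b that(2) by (auto simp: Fset_def support_def)
  qed
  ultimately show ?thesis by (auto simp: Fset_def support_def)
qed

lemma Fmul_scaled_word: "s \<in> Rset p n \<Longrightarrow>
   Fmul p n \<gamma> (scaled_word r u) (scaled_word s v) = scaled_word (\<lambda>x. r x * sig_word p n \<gamma> u s x) (u @ v)"
proof (intro ext)
  fix w x assume s: "s \<in> Rset p n"
  have "Fmul p n \<gamma> (scaled_word r u) (scaled_word s v) w x =
     (\<Sum>k\<in>{0..length w}. if k = length u \<and> w = u @ v then r x * sig_word p n \<gamma> u s x else 0)"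
    unfolding Fmul_def
  proof (rule sum.cong[OF refl])
    fix k assume k: "k \<in> {0..length w}"
    show "scaled_word r u (take k w) x * sig_word p n \<gamma> (take k w) (scaled_word s v (drop k w)) x =
      (if k = length u \<and> w = u @ v then r x * sig_word p n \<gamma> u s x else 0)"
    proof (cases "take k w = u \<and> drop k w = v")
      case True
      then have "w = u @ v" by (metis append_take_drop_id)
      moreover have "k = length u" using True k by auto
      ultimately show ?thesis using True by (simp add: scaled_word_def)
    next
      case False
      then show ?thesis by (auto simp: scaled_word_def sig_word_zero)
    qed
  qed
  also have "\<dots> = scaled_word (\<lambda>x. r x * sig_word p n \<gamma> u s x) (u @ v) w x"
    by (auto simp: scaled_word_def sum.delta)
  finally show "Fmul p n \<gamma> (scaled_word r u) (scaled_word s v) w x = scaled_word (\<lambda>x. r x * sig_word p n \<gamma> u s x) (u @ v) w x" .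
qed

lemma Fmul_scalar_left: "Fmul p n \<gamma> (scaled_word r []) c = (\<lambda>w x. r x * c w x)"
proof (intro ext)
  fix w x
  have "Fmul p n \<gamma> (scaled_word r []) c w x = (\<Sum>k\<in>{0..length w}. if k = 0 then r x * c w x else 0)"
    unfolding Fmul_def by (rule sum.cong[OF refl]) (auto simp: scaled_word_def sig_word_Nil)
  then show "Fmul p n \<gamma> (scaled_word r []) c w x = r x * c w x" by simp
qed

lemma Fneg_scaled_word: "Fneg (scaled_word r w) = scaled_word (\<lambda>x. - r x) w"
  by (auto simp: Fneg_def scaled_word_def)

lemma Fmul_add_left: "Fmul p n \<gamma> (Fadd a b) x = Fadd (Fmul p n \<gamma> a x) (Fmul p n \<gamma> b x)"
  by (simp add: Fmul_def Fadd_def algebra_simps sum.distrib)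

lemma Fmul_add_right: "a \<in> Fset p n m \<Longrightarrow> b \<in> Fset p n m \<Longrightarrow>
  Fmul p n \<gamma> x (Fadd a b) = Fadd (Fmul p n \<gamma> x a) (Fmul p n \<gamma> x b)"
proof (intro ext)
  fix w y assume "a \<in> Fset p n m" "b \<in> Fset p n m"
  then have "sig_word p n \<gamma> u (\<lambda>x. a v x + b v x) = (\<lambda>x. sig_word p n \<gamma> u (a v) x + sig_word p n \<gamma> u (b v) x)"
    for u v by (simp add: Fset_def sig_word_add)
  then show "Fmul p n \<gamma> x (Fadd a b) w y = Fadd (Fmul p n \<gamma> x a) (Fmul p n \<gamma> x b) w y"
    by (simp add: Fmul_def Fadd_def algebra_simps sum.distrib)
qed

lemma Fmul_neg_right: "a \<in> Fset p n m \<Longrightarrow> Fmul p n \<gamma> x (Fneg a) = Fneg (Fmul p n \<gamma> x a)"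
proof (intro ext)
  fix w y assume "a \<in> Fset p n m"
  then have "sig_word p n \<gamma> u (\<lambda>x. - a v x) = (\<lambda>x. - sig_word p n \<gamma> u (a v) x)" for u v
    using sig_word_smul[of "a v" p n \<gamma> u "-1"] by (simp add: Fset_def)
  then show "Fmul p n \<gamma> x (Fneg a) w y = Fneg (Fmul p n \<gamma> x a) w y"
    by (simp add: Fmul_def Fneg_def sum_negf)
qed

lemma sum_split_words:
  assumes "finite S"
  shows "(\<Sum>w\<in>S. \<Sum>k\<in>{0..length w}. F (take k w, drop k w)) = (\<Sum>uv\<in>{(u, v). u @ v \<in> S}. F uv)"
proof -
  have "(\<Sum>w\<in>S. \<Sum>k\<in>{0..length w}. F (take k w, drop k w))
      = (\<Sum>wk\<in>Sigma S (\<lambda>w. {0..length w}). F (take (snd wk) (fst wk), drop (snd wk) (fst wk)))"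
    using assms by (subst sum.Sigma) (auto simp: split_def)
  also have "\<dots> = (\<Sum>uv\<in>{(u, v). u @ v \<in> S}. F uv)"
    by (rule sum.reindex_bij_witness[where i = "\<lambda>(u, v). (u @ v, length u)"
          and j = "\<lambda>(w, k). (take k w, drop k w)"]) auto
  finally show ?thesis .
qed

lemma finite_splits: "finite S \<Longrightarrow> finite {(u, v). u @ v \<in> S}"
proof -
  assume "finite S"
  moreover have "{(u, v). u @ v \<in> S} \<subseteq> (\<lambda>(w, k). (take k w, drop k w)) ` Sigma S (\<lambda>w. {0..length w})"
    by (auto intro!: image_eqI[where x = "(u @ v, length u)" for u v])
  ultimately show ?thesis by (meson finite_SigmaI finite_atLeastAtMost finite_imageI finite_subset)
qed

definition letter_deg :: "letter \<Rightarrow> nat \<Rightarrow> int" where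
  "letter_deg l = (\<lambda>j. if j = snd l then (if fst l then 1 else -1) else 0)"

lemma wdeg_Nil [simp]: "wdeg [] = (\<lambda>i. 0)"
  by (simp add: wdeg_def)

lemma wdeg_Cons: "wdeg (l # u) = (\<lambda>j. letter_deg l j + wdeg u j)"
  by (cases l) (auto simp: wdeg_def letter_deg_def)

lemma wdeg_append: "wdeg (u @ v) = (\<lambda>j. wdeg u j + wdeg v j)"
  by (auto simp: wdeg_def)

lemma wdeg_count: "wdeg w i = int (count (mset w) (True, i)) - int (count (mset w) (False, i))"
proof -
  have "length (filter (\<lambda>l. l = x) w) = count (mset w) x" for x
    by (induction w) auto
  then show ?thesis by (simp add: wdeg_def)
qed

lemma wdeg_mset: "mset u = mset v \<Longrightarrow> wdeg u = wdeg v"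
  by (simp add: wdeg_count fun_eq_iff)

definition adjoint_word :: "letter list \<Rightarrow> letter list" where
  "adjoint_word w = rev (map (\<lambda>l. (\<not> fst l, snd l)) w)"

lemma wdeg_adjoint_word: "wdeg (adjoint_word w) = (\<lambda>j. - wdeg w j)"
proof -
  have "count (mset (adjoint_word w)) (b, j) = count (mset w) (\<not> b, j)" for b j
    unfolding adjoint_word_def by (induction w) auto
  then show ?thesis by (simp add: wdeg_count fun_eq_iff)
qed

definition reduced :: "letter list \<Rightarrow> bool" where
  "reduced w \<longleftrightarrow> (\<forall>i. (True, i) \<in> set w \<longrightarrow> (False, i) \<notin> set w)"

definition skew_commuting :: "letter \<Rightarrow> letter \<Rightarrow> bool" where
  "skew_commuting l a \<longleftrightarrow> snd l \<noteq> snd a \<and> fst l \<noteq> fst a"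

lemma reduced_subset: "reduced w \<Longrightarrow> set x \<subseteq> set w \<Longrightarrow> reduced x"
  by (auto simp: reduced_def)

lemma reduced_opposite_letter: "reduced w \<Longrightarrow> (b, i) \<in> set w \<Longrightarrow> (\<not> b, i) \<notin> set w"
  by (cases b) (auto simp: reduced_def)

lemma reduced_wdeg_0: "reduced w \<Longrightarrow> wdeg w = (\<lambda>i. 0) \<Longrightarrow> w = []"
proof (rule ccontr)
  assume red: "reduced w" and deg: "wdeg w = (\<lambda>i. 0)" and "w \<noteq> []"
  then obtain b i w' where w: "w = (b, i) # w'" by (cases w) auto
  then have "count (mset w) (\<not> b, i) = 0" "count (mset w) (b, i) > 0"
    using reduced_opposite_letter[OF red] by auto
  then have "wdeg w i \<noteq> 0" by (cases b) (simp_all add: wdeg_count del: count_mset_0_iff)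
  then show False using deg by simp
qed

text \<open>Every non-reduced word contains a pair \<open>X\<^sub>i \<dots> Y\<^sub>i\<close> or \<open>Y\<^sub>i \<dots> X\<^sub>i\<close> whose interior is
  reduced and free of the index \<open>i\<close>: take the rightmost letter whose opposite occurs after it,
  and the next occurrence of its index.\<close>

lemma not_reduced_decomp:
  "\<not> reduced w \<Longrightarrow> \<exists>u b i x v. w = u @ [(b, i)] @ x @ [(\<not> b, i)] @ v \<and> reduced x \<and> (\<forall>l\<in>set x. snd l \<noteq> i)"
proof (induction w)
  case Nil
  then show ?case by (simp add: reduced_def)
next
  case (Cons a w)
  show ?case
  proof (cases "reduced w")
    case False
    then obtain u b i x v where "w = u @ [(b, i)] @ x @ [(\<not> b, i)] @ v" "reduced x" "\<forall>l\<in>set x. snd l \<noteq> i"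
      using Cons.IH by blast
    then show ?thesis by (intro exI[where x = "a # u"]) auto
  next
    case True
    obtain b i where a: "a = (b, i)" by (cases a)
    have "(\<not> b, i) \<in> set w"
      using Cons.prems True a by (cases b) (auto simp: reduced_def)
    then have "\<exists>z\<in>set w. snd z = i" by force
    then obtain ys z zs where w: "w = ys @ z # zs" and z: "snd z = i" and ys: "\<forall>y\<in>set ys. snd y \<noteq> i"
      using split_list_first_prop[of w "\<lambda>z. snd z = i"] by blast
    have "z = (\<not> b, i)"
      using reduced_opposite_letter[OF True \<open>(\<not> b, i) \<in> set w\<close>] w z by (cases z) auto
    moreover have "reduced ys" using True w by (auto intro: reduced_subset)
    ultimately show ?thesis using w ys a
      by (intro exI[where x = "[]"] exI[where x = b] exI[where x = i] exI[where x = ys] exI[where x = zs]) auto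
  qed
qed

section \<open>A representation of the free ring\<close>

definition parity_sign :: "int \<Rightarrow> 'k::field" where
  "parity_sign z = (if even z then 1 else -1)"

lemma parity_sign_diff: "parity_sign (a - b) = (parity_sign a * parity_sign b :: 'k::field)"
  by (auto simp: parity_sign_def)

lemma parity_sign_uminus: "parity_sign (- a) = (parity_sign a :: 'k::field)"
  by (simp add: parity_sign_def)

lemma parity_sign_0 [simp]: "parity_sign 0 = (1 :: 'k::field)"
  by (simp add: parity_sign_def)

lemma parity_sign_square [simp]: "parity_sign a * parity_sign a = (1 :: 'k::field)"
  by (simp add: parity_sign_def)

lemma parity_sign_nonzero [simp]: "parity_sign a \<noteq> (0 :: 'k::field)"
  by (simp add: parity_sign_def)

text \<open>The action below is that of the free ring on functions \<open>f : V \<times> \<int>\<^sup>m \<rightarrow> k\<close>: a word \<open>w\<close> sends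
  \<open>f\<close> to \<open>(y, h) \<mapsto> word_weight w y h \<cdot> f (\<sigma>\<^sub>w(y), h - deg w)\<close>. The weight of a letter is a
  product of one factor per coordinate (Pochhammer symbols for \<open>j \<le> p\<close>, \<open>x\<close> or \<open>1 - x\<close> for
  \<open>j > p\<close>), chosen so that \<open>Y\<^sub>iX\<^sub>i\<close> and \<open>X\<^sub>iY\<^sub>i\<close> act by \<open>t\<^sub>i\<close> and \<open>\<sigma>\<^sub>i(t\<^sub>i)\<close>, times a sign depending on
  \<open>h\<close> that produces the factors \<open>\<mu>\<^sub>i\<^sub>j\<close>.\<close>

locale gamma_minus =
  fixes p n m :: nat and \<gamma> :: "nat \<Rightarrow> nat \<Rightarrow> int"
  assumes p_le_n: "p \<le> n" and gamma_cond: "gamma_cond_minus p n m \<gamma>"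
begin

abbreviation V where "V \<equiv> Vset p n"

definition sign_twist :: "nat \<Rightarrow> (nat \<Rightarrow> int) \<Rightarrow> 'k::field" where
  "sign_twist i h = parity_sign (pbar p n \<gamma> i * (\<Sum>l\<in>{1..<i}. pbar p n \<gamma> l * h l))"

definition coeff_X :: "nat \<Rightarrow> int \<Rightarrow> 'k::field \<Rightarrow> 'k" where
  "coeff_X j c x = (if j \<le> p then (if c < 0 then pochhammer x (nat (- c)) else 1)
                    else (if c = 1 then 1 - x else if c = -1 then - x else 1))"

definition coeff_Y :: "nat \<Rightarrow> int \<Rightarrow> 'k::field \<Rightarrow> 'k" where
  "coeff_Y j c x = (if j \<le> p then (if 0 < c then pochhammer x (nat c) else 1)
                    else (if c = 1 then x else if c = -1 then 1 - x else 1))"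

definition letter_coeff :: "letter \<Rightarrow> nat \<Rightarrow> 'k::field \<Rightarrow> 'k" where
  "letter_coeff l j x = (if fst l then coeff_X j (\<gamma> j (snd l)) x else coeff_Y j (\<gamma> j (snd l)) x)"

definition letter_weight :: "letter \<Rightarrow> (nat \<Rightarrow> 'k::field) \<Rightarrow> (nat \<Rightarrow> int) \<Rightarrow> 'k" where
  "letter_weight l y h = (if y \<in> V then sign_twist (snd l) h * (\<Prod>j\<in>{1..n}. letter_coeff l j (y j)) else 0)"

definition letter_move :: "letter \<Rightarrow> (nat \<Rightarrow> 'k::field) \<Rightarrow> (nat \<Rightarrow> 'k)" where
  "letter_move l y = shift_point p n (letter_shift \<gamma> l) y"

fun word_weight :: "letter list \<Rightarrow> (nat \<Rightarrow> 'k::field) \<Rightarrow> (nat \<Rightarrow> int) \<Rightarrow> 'k" where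
  "word_weight [] y h = 1"
| "word_weight (l # u) y h = letter_weight l y h * word_weight u (letter_move l y) (\<lambda>j. h j - letter_deg l j)"

definition word_move :: "letter list \<Rightarrow> (nat \<Rightarrow> 'k::field) \<Rightarrow> (nat \<Rightarrow> 'k)" where
  "word_move w y = shift_point p n (word_shift \<gamma> w) y"

definition act_word :: "letter list \<Rightarrow> ((nat \<Rightarrow> 'k::field) \<Rightarrow> (nat \<Rightarrow> int) \<Rightarrow> 'k)
     \<Rightarrow> (nat \<Rightarrow> 'k) \<Rightarrow> (nat \<Rightarrow> int) \<Rightarrow> 'k" where
  "act_word w f y h = word_weight w y h * f (word_move w y) (\<lambda>j. h j - wdeg w j)"

definition act :: "'k::field elt \<Rightarrow> ((nat \<Rightarrow> 'k) \<Rightarrow> (nat \<Rightarrow> int) \<Rightarrow> 'k)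
     \<Rightarrow> (nat \<Rightarrow> 'k) \<Rightarrow> (nat \<Rightarrow> int) \<Rightarrow> 'k" where
  "act c f y h = (\<Sum>w\<in>support c. c w y * act_word w f y h)"

abbreviation word_elt :: "letter list \<Rightarrow> 'k::field elt" where
  "word_elt w \<equiv> scaled_word (oneR p n) w"

lemma sign_twist_square [simp]: "sign_twist i h * sign_twist i h = (1::'k::field)"
  by (simp add: sign_twist_def)

lemma word_move_Nil [simp]: "word_move [] y = y"
  by (simp add: word_move_def)

lemma word_move_Cons: "word_move (l # u) y = word_move u (letter_move l y)"
  by (simp add: word_move_def letter_move_def shift_point_add)

lemma word_move_append: "word_move (u @ v) y = word_move v (word_move u y)"
  by (simp add: word_move_def shift_point_add word_shift_append)

lemma letter_move_coord: "1 \<le> j \<Longrightarrow> j \<le> n \<Longrightarrow> letter_move l y j = shift_coord p j (letter_shift \<gamma> l j) (y j)"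
  by (simp add: letter_move_def shift_point_def)

lemma letter_move_V: "y \<in> V \<Longrightarrow> letter_move l y \<in> V"
  by (simp add: letter_move_def shift_point_Vset)

lemma letter_weight_in_V: "y \<in> V \<Longrightarrow> letter_weight l y h = sign_twist (snd l) h * (\<Prod>j\<in>{1..n}. letter_coeff l j (y j))"
  by (simp add: letter_weight_def)

lemma word_weight_append:
  "word_weight (u @ v) y h = word_weight u y h * word_weight v (word_move u y) (\<lambda>j. h j - wdeg u j)"
  by (induction u arbitrary: y h) (simp_all add: word_move_Cons wdeg_Cons algebra_simps)

lemma act_word_append: "act_word (u @ v) f y h = act_word u (act_word v f) y h"
  by (simp add: act_word_def word_weight_append word_move_append wdeg_append algebra_simps)

lemma word_weight_nonzero_V: "word_weight u y h \<noteq> 0 \<Longrightarrow> u \<noteq> [] \<Longrightarrow> y \<in> V"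
  by (cases u) (auto simp: letter_weight_def split: if_splits)

text \<open>Moving a coefficient across a word: \<open>w r = \<sigma>\<^sub>w(r) w\<close> is matched by \<open>\<sigma>\<^sub>w(r)(y) = r(\<sigma>\<^sub>w y)\<close> on \<open>V\<close>.\<close>

lemma sig_word_times_word_weight: "r \<in> Rset p n \<Longrightarrow>
   sig_word p n \<gamma> u r y * word_weight u y h = r (word_move u y) * word_weight u y h"
proof (cases "u = [] \<or> word_weight u y h = 0")
  case False
  then have "y \<in> V" using word_weight_nonzero_V by blast
  moreover assume "r \<in> Rset p n"
  ultimately show ?thesis by (simp add: word_move_def sig_word_eq_pullback pullback_at)
qed (auto simp: sig_word_Nil)

lemma act_superset: "finite S \<Longrightarrow> support c \<subseteq> S \<Longrightarrow> act c f y h = (\<Sum>w\<in>S. c w y * act_word w f y h)"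
  unfolding act_def by (rule sum.mono_neutral_left) (auto simp: support_def)

lemma act_scaled_word: "act (scaled_word r w) f y h = r y * act_word w f y h"
  using act_superset[of "{w}" "scaled_word r w" f y h] support_scaled_word[of r w] by (simp add: scaled_word_def)

lemma act_Fzero: "act Fzero f y h = 0"
  by (simp add: act_def support_def Fzero_def)

lemma act_zero_fun: "act c (\<lambda>y h. 0) y h = 0"
  by (simp add: act_def act_word_def)

lemma act_Fneg: "act (Fneg a) f y h = - act a f y h"
proof -
  have "support (Fneg a) = support a" by (auto simp: support_def Fneg_def fun_eq_iff)
  then show ?thesis by (simp add: act_def Fneg_def sum_negf)
qed

lemma act_Fadd: "a \<in> Fset p n m \<Longrightarrow> b \<in> Fset p n m \<Longrightarrow>
   act (Fadd a b) f y h = act a f y h + act b f y h"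
proof -
  assume a: "a \<in> Fset p n m" and b: "b \<in> Fset p n m"
  let ?S = "support a \<union> support b"
  have fin: "finite ?S" using a b by (simp add: finite_support)
  show ?thesis
    using act_superset[OF fin support_Fadd] act_superset[OF fin, of a] act_superset[OF fin, of b]
    by (simp add: Fadd_def sum.distrib algebra_simps)
qed

lemma act_Fmul: "a \<in> Fset p n m \<Longrightarrow> b \<in> Fset p n m \<Longrightarrow>
   act (Fmul p n \<gamma> a b) f y h = act a (act b f) y h"
proof -
  assume a: "a \<in> Fset p n m" and b: "b \<in> Fset p n m"
  let ?Sa = "support a" and ?Sb = "support b"
  let ?S = "(\<lambda>(u, v). u @ v) ` (?Sa \<times> ?Sb)"
  have fin: "finite ?S" using a b by (simp add: finite_support)
  define F where "F = (\<lambda>(u, v). a u y * sig_word p n \<gamma> u (b v) y * act_word (u @ v) f y h)"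
  have "act (Fmul p n \<gamma> a b) f y h = (\<Sum>w\<in>?S. \<Sum>k\<in>{0..length w}. F (take k w, drop k w))"
    using act_superset[OF fin support_Fmul[of p n \<gamma> a b]] by (simp add: Fmul_def F_def sum_distrib_right)
  also have "\<dots> = (\<Sum>uv\<in>{(u, v). u @ v \<in> ?S}. F uv)"
    by (rule sum_split_words[OF fin])
  also have "\<dots> = (\<Sum>uv\<in>?Sa \<times> ?Sb. F uv)"
    by (rule sum.mono_neutral_right) (use finite_splits[OF fin] in \<open>auto simp: F_def support_def sig_word_zero\<close>)
  also have "\<dots> = (\<Sum>u\<in>?Sa. a u y * act_word u (act b f) y h)"
  proof -
    have "F (u, v) = a u y * (b v (word_move u y) * word_weight u y h) * act_word v f (word_move u y) (\<lambda>j. h j - wdeg u j)"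
      for u v
    proof -
      have "F (u, v) = a u y * (sig_word p n \<gamma> u (b v) y * word_weight u y h) * act_word v f (word_move u y) (\<lambda>j. h j - wdeg u j)"
        by (simp add: F_def act_word_append act_word_def[of u] mult.assoc)
      also have "\<dots> = a u y * (b v (word_move u y) * word_weight u y h) * act_word v f (word_move u y) (\<lambda>j. h j - wdeg u j)"
        using b by (simp only: sig_word_times_word_weight Fset_def mem_Collect_eq)
      finally show ?thesis .
    qed
    then show ?thesis
      by (simp add: sum.cartesian_product' act_word_def act_def sum_distrib_left
          sum_distrib_right algebra_simps)
  qed
  also have "\<dots> = act a (act b f) y h" by (simp add: act_def)
  finally show ?thesis .
qed

end

section \<open>The defining relations act by zero\<close>

context gamma_minus
begin

lemma odd_coord: "y \<in> V \<Longrightarrow> p < k \<Longrightarrow> k \<le> n \<Longrightarrow> y k = 0 \<or> y k = 1"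
  by (auto simp: Vset_def)

lemma gamma_odd_entry: "p < k \<Longrightarrow> k \<le> n \<Longrightarrow> i \<in> {1..m} \<Longrightarrow> \<gamma> k i = 0 \<or> \<gamma> k i = 1 \<or> \<gamma> k i = -1"
proof -
  assume "p < k" "k \<le> n" "i \<in> {1..m}"
  then have "\<bar>\<gamma> k i\<bar> \<le> 1" using gamma_cond by (auto simp: gamma_cond_minus_def)
  then show ?thesis by linarith
qed

lemma coeff_Y_coeff_X:
  assumes "p < k \<Longrightarrow> x = 0 \<or> x = 1" and "p < k \<Longrightarrow> c = 0 \<or> c = 1 \<or> c = -1"
  shows "coeff_Y k c x * coeff_X k c (shift_coord p k (- c) x) = ufac c (x::'k::field)"
proof (cases "k \<le> p")
  case True
  then show ?thesis
    by (cases "0 < c"; cases "c < 0") (simp_all add: coeff_X_def coeff_Y_def ufac_pos ufac_neg shift_coord_def)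
next
  case False
  with assms show ?thesis by (auto simp: coeff_X_def coeff_Y_def shift_coord_def ufac_def)
qed

text \<open>Under condition (ii), \<open>X\<^sub>iY\<^sub>j\<close> and \<open>Y\<^sub>jX\<^sub>i\<close> have equal coefficients coordinatewise when all
  products \<open>\<gamma>\<^sub>k\<^sub>i\<gamma>\<^sub>k\<^sub>j \<le> 0\<close> (by \<open>(x)\<^sub>a(x + a)\<^sub>b = (x)\<^sub>b(x + b)\<^sub>a\<close>), and both vanish at an odd
  coordinate with \<open>\<gamma>\<^sub>k\<^sub>i\<gamma>\<^sub>k\<^sub>j < 0\<close>.\<close>

lemma coeff_X_coeff_Y_swap:
  assumes x: "p < k \<Longrightarrow> x = 0 \<or> x = 1" and c: "p < k \<Longrightarrow> c = 0 \<or> c = 1 \<or> c = -1"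
    and d: "p < k \<Longrightarrow> d = 0 \<or> d = 1 \<or> d = -1" and cd: "c * d \<le> 0"
  shows "coeff_X k c x * coeff_Y k d (shift_coord p k c x) = coeff_Y k d x * coeff_X k c (shift_coord p k (- d) (x::'k::field))"
proof (cases "c = 0 \<or> d = 0")
  case True
  then show ?thesis by (auto simp: coeff_X_def coeff_Y_def)
next
  case False
  then have signs: "(0 < c \<and> d < 0) \<or> (c < 0 \<and> 0 < d)" using cd
    by (metis linorder_neqE_linordered_idom mult_neg_neg mult_pos_pos not_le)
  show ?thesis
  proof (cases "k \<le> p")
    case True
    have "pochhammer x (nat (- c)) * pochhammer (x + of_nat (nat (- c))) (nat d)
        = pochhammer x (nat d) * pochhammer (x + of_nat (nat d)) (nat (- c))"
      by (metis pochhammer_product' add.commute)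
    with signs True show ?thesis by (auto simp: coeff_X_def coeff_Y_def shift_coord_def)
  next
    case False
    then have "c = 1 \<or> c = -1" "d = 1 \<or> d = -1" using c d \<open>\<not> (c = 0 \<or> d = 0)\<close> by auto
    with False signs show ?thesis by (auto simp: coeff_X_def coeff_Y_def shift_coord_def algebra_simps)
  qed
qed

lemma coeff_X_coeff_Y_opposite:
  assumes "p < k" "x = 0 \<or> x = 1" "c = 0 \<or> c = 1 \<or> c = -1" "d = 0 \<or> d = 1 \<or> d = -1" "c * d < 0"
  shows "coeff_X k c x * coeff_Y k d (shift_coord p k c x) = 0"
    and "coeff_Y k d x * coeff_X k c (shift_coord p k (- d) (x::'k::field)) = 0"
  using assms by (auto simp: coeff_X_def coeff_Y_def shift_coord_def)

lemma pbar_01: "pbar p n \<gamma> i = 0 \<or> pbar p n \<gamma> i = 1"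
  by (auto simp: pbar_def)

lemma mu_eq_parity_sign: "mu p n \<gamma> i j = (parity_sign (pbar p n \<gamma> i * pbar p n \<gamma> j) :: 'k::field)"
  using pbar_01[of i] pbar_01[of j] by (auto simp: mu_def parity_sign_def)

lemma sign_twist_shift: "sign_twist j (\<lambda>l. h l - letter_deg (b, i) l) =
   (sign_twist j h * (if 1 \<le> i \<and> i < j then parity_sign (pbar p n \<gamma> j * pbar p n \<gamma> i) else 1) :: 'k::field)"
proof -
  have "(\<Sum>l\<in>{1..<j}. pbar p n \<gamma> l * (h l - letter_deg (b, i) l))
      = (\<Sum>l\<in>{1..<j}. pbar p n \<gamma> l * h l) - (if 1 \<le> i \<and> i < j then (if b then 1 else -1) * pbar p n \<gamma> i else 0)"
    by (auto simp: algebra_simps sum_subtractf letter_deg_def if_distrib sum.delta cong: if_cong)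
  then show ?thesis
    by (auto simp: sign_twist_def right_diff_distrib parity_sign_diff parity_sign_uminus)
qed

lemma word_weight_pair:
  "y \<in> V \<Longrightarrow> word_weight [l1, l2] y h = sign_twist (snd l1) h * sign_twist (snd l2) (\<lambda>j. h j - letter_deg l1 j) *
     (\<Prod>j\<in>{1..n}. letter_coeff l1 j (y j) * letter_coeff l2 j (letter_move l1 y j))"
  by (simp add: letter_weight_in_V letter_move_V prod.distrib)

lemma word_weight_YX: "i \<in> {1..m} \<Longrightarrow> y \<in> V \<Longrightarrow> word_weight [(False, i), (True, i)] y h = tt p n \<gamma> i y"
proof -
  assume i: "i \<in> {1..m}" and y: "y \<in> V"
  have "word_weight [(False, i), (True, i)] y h
      = (\<Prod>j\<in>{1..n}. coeff_Y j (\<gamma> j i) (y j) * coeff_X j (\<gamma> j i) (shift_coord p j (- \<gamma> j i) (y j)))"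
    unfolding word_weight_pair[OF y] by (simp add: sign_twist_shift letter_coeff_def letter_move_coord)
  also have "\<dots> = (\<Prod>j\<in>{1..n}. ufac (\<gamma> j i) (y j))"
    by (rule prod.cong[OF refl], rule coeff_Y_coeff_X) (use y i odd_coord gamma_odd_entry in auto)
  finally show ?thesis using y by (simp add: tt_def onV_def)
qed

lemma word_weight_XY: "i \<in> {1..m} \<Longrightarrow> y \<in> V \<Longrightarrow>
   word_weight [(True, i), (False, i)] y h = sig p n \<gamma> i (tt p n \<gamma> i) y"
proof -
  assume i: "i \<in> {1..m}" and y: "y \<in> V"
  let ?y' = "letter_move (True, i) y"
  have y': "?y' \<in> V" using y by (rule letter_move_V)
  have "word_weight [(True, i), (False, i)] y h
      = (\<Prod>j\<in>{1..n}. coeff_Y j (\<gamma> j i) (?y' j) * coeff_X j (\<gamma> j i) (shift_coord p j (- \<gamma> j i) (?y' j)))"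
    unfolding word_weight_pair[OF y]
    by (auto simp: sign_twist_shift letter_coeff_def letter_move_coord shift_coord_add mult.commute intro!: prod.cong)
  also have "\<dots> = (\<Prod>j\<in>{1..n}. ufac (\<gamma> j i) (?y' j))"
    by (rule prod.cong[OF refl], rule coeff_Y_coeff_X) (use y' i odd_coord gamma_odd_entry in auto)
  also have "\<dots> = tt p n \<gamma> i ?y'" using y' by (simp add: tt_def onV_def)
  finally show ?thesis
    using y by (simp add: sig_eq_pullback tt_Rset pullback_at letter_move_def letter_shift_def)
qed

lemma word_weight_XY_YX: "i \<in> {1..m} \<Longrightarrow> j \<in> {1..m} \<Longrightarrow> i \<noteq> j \<Longrightarrow> y \<in> V \<Longrightarrow>
   word_weight [(True, i), (False, j)] y h = mu p n \<gamma> i j * word_weight [(False, j), (True, i)] y h"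
proof -
  assume i: "i \<in> {1..m}" and j: "j \<in> {1..m}" and ij: "i \<noteq> j" and y: "y \<in> V"
  let ?L = "\<Prod>k\<in>{1..n}. coeff_X k (\<gamma> k i) (y k) * coeff_Y k (\<gamma> k j) (shift_coord p k (\<gamma> k i) (y k))"
  let ?R = "\<Prod>k\<in>{1..n}. coeff_Y k (\<gamma> k j) (y k) * coeff_X k (\<gamma> k i) (shift_coord p k (- \<gamma> k j) (y k))"
  have L: "word_weight [(True, i), (False, j)] y h = sign_twist i h * sign_twist j h *
      (if 1 \<le> i \<and> i < j then parity_sign (pbar p n \<gamma> j * pbar p n \<gamma> i) else 1) * ?L"
    unfolding word_weight_pair[OF y] by (simp add: sign_twist_shift letter_coeff_def letter_move_coord algebra_simps)
  have R: "word_weight [(False, j), (True, i)] y h = sign_twist j h * sign_twist i h *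
      (if 1 \<le> j \<and> j < i then parity_sign (pbar p n \<gamma> i * pbar p n \<gamma> j) else 1) * ?R"
    unfolding word_weight_pair[OF y] by (simp add: sign_twist_shift letter_coeff_def letter_move_coord algebra_simps)
  have "?L = ?R"
  proof (cases "\<exists>k\<in>{p<..n}. \<gamma> k i * \<gamma> k j < 0")
    case True
    then obtain k where k: "p < k" "k \<le> n" "\<gamma> k i * \<gamma> k j < 0" by auto
    note opp = coeff_X_coeff_Y_opposite[OF k(1) odd_coord[OF y k(1,2)]
        gamma_odd_entry[OF k(1,2) i] gamma_odd_entry[OF k(1,2) j] k(3)]
    have "k \<in> {1..n}" using k by auto
    then have "?L = 0" "?R = 0" using opp by (auto intro: prod_zero)
    then show ?thesis by (simp only:)
  next
    case False
    then have "\<forall>k\<in>{1..n}. \<gamma> k i * \<gamma> k j \<le> 0"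
      using gamma_cond i j ij unfolding gamma_cond_minus_def by blast
    then show ?thesis
      by (intro prod.cong[OF refl] coeff_X_coeff_Y_swap) (use y i j odd_coord gamma_odd_entry in auto)
  qed
  with L R i j ij show ?thesis
    by (cases "i < j") (simp_all add: mu_eq_parity_sign algebra_simps del: word_weight.simps)
qed

lemma scaled_word_pair_eq_Fadd:
  "A \<noteq> B \<Longrightarrow> (\<lambda>w. if w = A then a else if w = B then b else (\<lambda>v. 0)) = Fadd (scaled_word a A) (scaled_word b B)"
  by (auto simp: Fadd_def scaled_word_def fun_eq_iff)

lemma act_scaled_word_pair:
  assumes "a \<in> Rset p n" "b \<in> Rset p n" "word_over m A" "word_over m B"
  shows "Fadd (scaled_word a A) (scaled_word b B) \<in> Fset p n m"
    and "act (Fadd (scaled_word a A) (scaled_word b B)) f y h = a y * act_word A f y h + b y * act_word B f y h"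
  using assms by (simp_all add: Fadd_Fset scaled_word_Fset act_Fadd act_scaled_word)

lemma wdeg_cancelling_pair: "wdeg [(b, i), (\<not> b, i)] = (\<lambda>j. 0)"
  by (cases b) (auto simp: wdeg_Cons letter_deg_def)

lemma word_move_cancelling_pair: "word_move [(b, i), (\<not> b, i)] y = y"
  by (cases b) (simp_all add: word_move_def)

lemma act_word_cancelling_pair: "act_word [(b, i), (\<not> b, i)] f y h = word_weight [(b, i), (\<not> b, i)] y h * f y h"
  by (simp add: act_word_def word_move_cancelling_pair wdeg_cancelling_pair del: word_weight.simps)

lemma act_word_commuting_pair:
  "act_word [(True, i), (False, j)] f y h
     = word_weight [(True, i), (False, j)] y h * f (word_move [(False, j), (True, i)] y) (\<lambda>k. h k - wdeg [(False, j), (True, i)] k)"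
  by (simp add: act_word_def word_move_def wdeg_Cons add.commute del: word_weight.simps)

lemma act_cancelling_relation:
  assumes t: "t \<in> Rset p n" and i: "i \<in> {1..m}"
    and weight: "\<And>y h. y \<in> V \<Longrightarrow> word_weight [(b, i), (\<not> b, i)] y h = t y"
  shows "Fadd (word_elt [(b, i), (\<not> b, i)]) (scaled_word (\<lambda>v. - t v) []) \<in> Fset p n m"
    and "act (Fadd (word_elt [(b, i), (\<not> b, i)]) (scaled_word (\<lambda>v. - t v) [])) f y h = 0"
proof -
  have "word_over m [(b, i), (\<not> b, i)]" using i by simp
  note act = act_scaled_word_pair[OF Rset_oneR Rset_neg[OF t] this word_over_simps(1)]
  show "Fadd (word_elt [(b, i), (\<not> b, i)]) (scaled_word (\<lambda>v. - t v) []) \<in> Fset p n m"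
    by (rule act(1))
  have "act (Fadd (word_elt [(b, i), (\<not> b, i)]) (scaled_word (\<lambda>v. - t v) [])) f y h
      = oneR p n y * word_weight [(b, i), (\<not> b, i)] y h * f y h - t y * f y h"
    unfolding act(2) by (simp add: act_word_cancelling_pair act_word_def[of "[]"] mult.assoc
        del: word_weight.simps(2))
  then show "act (Fadd (word_elt [(b, i), (\<not> b, i)]) (scaled_word (\<lambda>v. - t v) [])) f y h = 0"
    using weight Rset_vanish[OF t] by (cases "y \<in> V") (simp_all add: oneR_apply del: word_weight.simps)
qed

lemma act_commuting_relation:
  assumes ij: "i \<in> {1..m}" "j \<in> {1..m}" "i \<noteq> j"
  defines "r \<equiv> Fadd (word_elt [(True, i), (False, j)]) (scaled_word (\<lambda>v. - mu p n \<gamma> i j * oneR p n v) [(False, j), (True, i)])"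
  shows "r \<in> Fset p n m" and "act r f y h = 0"
proof -
  have "word_over m [(True, i), (False, j)]" "word_over m [(False, j), (True, i)]" using ij by simp_all
  note act = act_scaled_word_pair[OF Rset_oneR Rset_const[of "- mu p n \<gamma> i j"] this]
  show "r \<in> Fset p n m" unfolding r_def by (rule act(1))
  have "act r f y h = oneR p n y * (word_weight [(True, i), (False, j)] y h
      - mu p n \<gamma> i j * word_weight [(False, j), (True, i)] y h) * f (word_move [(False, j), (True, i)] y)
        (\<lambda>k. h k - wdeg [(False, j), (True, i)] k)"
    unfolding r_def act(2)
    by (simp add: act_word_commuting_pair act_word_def[of "[(False, j), (True, i)]"] algebra_simps
        del: word_weight.simps)
  then show "act r f y h = 0"
    by (cases "y \<in> V") (simp_all add: word_weight_XY_YX[OF ij] oneR_apply del: word_weight.simps)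
qed

lemma act_rels: "r \<in> rels p n m \<gamma> \<Longrightarrow> r \<in> Fset p n m \<and> (\<forall>f y h. act r f y h = 0)"
proof -
  have sig_tt: "sig p n \<gamma> i (tt p n \<gamma> i) \<in> Rset p n" for i
    by (simp add: sig_eq_pullback tt_Rset pullback_Rset)
  assume "r \<in> rels p n m \<gamma>"
  then consider
    (YX) i where "i \<in> {1..m}"
      "r = Fadd (word_elt [(False, i), (True, i)]) (scaled_word (\<lambda>v. - tt p n \<gamma> i v) [])"
  | (XY) i where "i \<in> {1..m}"
      "r = Fadd (word_elt [(True, i), (False, i)]) (scaled_word (\<lambda>v. - sig p n \<gamma> i (tt p n \<gamma> i) v) [])"
  | (XY_YX) i j where "i \<in> {1..m}" "j \<in> {1..m}" "i \<noteq> j"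
      "r = Fadd (word_elt [(True, i), (False, j)])
              (scaled_word (\<lambda>v. - mu p n \<gamma> i j * oneR p n v) [(False, j), (True, i)])"
    unfolding rels_def by (auto simp: scaled_word_pair_eq_Fadd)
  then show ?thesis
  proof cases
    case (YX i)
    then show ?thesis
      using act_cancelling_relation[OF tt_Rset YX(1), where b = False, unfolded not_False_eq_True]
        word_weight_YX[OF YX(1)] by blast
  next
    case (XY i)
    then show ?thesis
      using act_cancelling_relation[OF sig_tt XY(1), where b = True, unfolded not_True_eq_False]
        word_weight_XY[OF XY(1)] by blast
  qed (use act_commuting_relation in blast)
qed

lemma Jgen_act_zero: "a \<in> Jgen p n m \<gamma> \<Longrightarrow> a \<in> Fset p n m \<and> (\<forall>f y h. act a f y h = 0)"
proof (induction rule: Jgen.induct)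
  case (rel r)
  then show ?case by (rule act_rels)
next
  case zero
  then show ?case by (simp add: Fzero_Fset act_Fzero)
next
  case (add a b)
  then show ?case by (simp add: Fadd_Fset act_Fadd)
next
  case (lmul c a)
  then have "act a f = (\<lambda>y h. 0)" for f by (auto intro!: ext)
  with lmul show ?case by (simp add: Fmul_Fset act_Fmul act_zero_fun)
next
  case (rmul c a)
  then show ?case by (simp add: Fmul_Fset act_Fmul)
qed

end

section \<open>Rewriting words modulo the relations\<close>

definition scalar :: "nat \<Rightarrow> nat \<Rightarrow> 'k::field \<Rightarrow> (nat \<Rightarrow> 'k) \<Rightarrow> 'k" where
  "scalar p n \<kappa> = (\<lambda>x. \<kappa> * oneR p n x)"

lemma scalar_Rset: "scalar p n \<kappa> \<in> Rset p n"
  by (simp add: scalar_def Rset_const)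

lemma scalar_mult: "(\<lambda>x. scalar p n a x * scalar p n b x) = scalar p n (a * b)"
  by (auto simp: scalar_def oneR_apply)

lemma scalar_1: "scalar p n 1 = oneR p n"
  by (simp add: scalar_def)

lemma sig_word_scalar: "sig_word p n \<gamma> u (scalar p n \<kappa>) = scalar p n \<kappa>"
  by (simp add: scalar_def sig_word_smul Rset_oneR sig_word_oneR)

context gamma_minus
begin

definition cong_J :: "'k::field elt \<Rightarrow> 'k elt \<Rightarrow> bool" where
  "cong_J c d \<longleftrightarrow> c \<in> Fset p n m \<and> d \<in> Fset p n m \<and> Fadd c (Fneg d) \<in> Jgen p n m \<gamma>"

lemma word_elt_Fset: "word_over m w \<Longrightarrow> word_elt w \<in> Fset p n m"
  by (simp add: scaled_word_Fset Rset_oneR)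

lemma word_elt_Fhom: "word_over m w \<Longrightarrow> word_elt w \<in> Fhom p n m (wdeg w)"
  using word_elt_Fset[of w] support_scaled_word[of "oneR p n" w] by (auto simp: Fhom_def support_def)

lemma Fneg_Jgen: "a \<in> Jgen p n m \<gamma> \<Longrightarrow> Fneg a \<in> Jgen p n m \<gamma>"
proof -
  assume a: "a \<in> Jgen p n m \<gamma>"
  then have "Fmul p n \<gamma> (scaled_word (scalar p n (-1)) []) a = Fneg a"
    using Jgen_act_zero[OF a] by (auto simp: Fmul_scalar_left Fneg_def scalar_def Fset_def Rset_oneR_mul)
  moreover have "scaled_word (scalar p n (-1)) [] \<in> Fset p n m" by (simp add: scaled_word_Fset scalar_Rset)
  ultimately show ?thesis using Jgen.lmul[OF _ a] by metis
qed

lemma cong_J_refl: "c \<in> Fset p n m \<Longrightarrow> cong_J c c"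
proof -
  have "Fadd c (Fneg c) = Fzero" by (simp add: Fadd_def Fneg_def Fzero_def)
  then show "c \<in> Fset p n m \<Longrightarrow> ?thesis" by (simp add: cong_J_def Jgen.zero)
qed

lemma cong_J_sym: "cong_J c d \<Longrightarrow> cong_J d c"
proof -
  have "Fadd d (Fneg c) = Fneg (Fadd c (Fneg d))" by (simp add: Fadd_def Fneg_def)
  then show "cong_J c d \<Longrightarrow> ?thesis" using Fneg_Jgen by (auto simp: cong_J_def)
qed

lemma cong_J_trans: "cong_J c d \<Longrightarrow> cong_J d e \<Longrightarrow> cong_J c e"
proof -
  have "Fadd c (Fneg e) = Fadd (Fadd c (Fneg d)) (Fadd d (Fneg e))" by (simp add: Fadd_def Fneg_def)
  then show "cong_J c d \<Longrightarrow> cong_J d e \<Longrightarrow> ?thesis" using Jgen.add by (auto simp: cong_J_def)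
qed

lemma cong_J_add: "cong_J a b \<Longrightarrow> cong_J c d \<Longrightarrow> cong_J (Fadd a c) (Fadd b d)"
proof -
  have "Fadd (Fadd a c) (Fneg (Fadd b d)) = Fadd (Fadd a (Fneg b)) (Fadd c (Fneg d))"
    by (auto simp: Fadd_def Fneg_def fun_eq_iff algebra_simps)
  then show "cong_J a b \<Longrightarrow> cong_J c d \<Longrightarrow> ?thesis" using Jgen.add by (auto simp: cong_J_def Fadd_Fset)
qed

lemma cong_J_lmul: "x \<in> Fset p n m \<Longrightarrow> cong_J a b \<Longrightarrow> cong_J (Fmul p n \<gamma> x a) (Fmul p n \<gamma> x b)"
proof -
  assume x: "x \<in> Fset p n m" and "cong_J a b"
  then have a: "a \<in> Fset p n m" and b: "b \<in> Fset p n m" and J: "Fadd a (Fneg b) \<in> Jgen p n m \<gamma>"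
    by (simp_all add: cong_J_def)
  have "Fmul p n \<gamma> x (Fadd a (Fneg b)) = Fadd (Fmul p n \<gamma> x a) (Fneg (Fmul p n \<gamma> x b))"
    using Fmul_add_right[OF a Fneg_Fset[OF b]] Fmul_neg_right[OF b] by simp
  with Jgen.lmul[OF x J] show ?thesis by (simp add: cong_J_def Fmul_Fset x a b)
qed

lemma cong_J_scale: "r \<in> Rset p n \<Longrightarrow> cong_J a b \<Longrightarrow>
   cong_J (Fmul p n \<gamma> (scaled_word r []) a) (Fmul p n \<gamma> (scaled_word r []) b)"
  by (rule cong_J_lmul) (simp_all add: scaled_word_Fset)

lemma scale_word_elt: "r \<in> Rset p n \<Longrightarrow> Fmul p n \<gamma> (scaled_word r []) (word_elt w) = scaled_word r w"
  by (simp add: Fmul_scaled_word sig_word_Nil Rset_oneR Rset_mul_oneR)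

lemma scale_scaled_word: "s \<in> Rset p n \<Longrightarrow>
   Fmul p n \<gamma> (scaled_word r []) (scaled_word s w) = scaled_word (\<lambda>x. r x * s x) w"
  by (simp add: Fmul_scaled_word sig_word_Nil)

lemma cong_J_word_chain:
  assumes "cong_J (word_elt w) (scaled_word r w')" "cong_J (word_elt w') (scaled_word s w'')"
    and r: "r \<in> Rset p n" and s: "s \<in> Rset p n"
  shows "cong_J (word_elt w) (scaled_word (\<lambda>x. r x * s x) w'')"
  using assms(1) cong_J_scale[OF r assms(2)] cong_J_trans
  by (simp add: scale_word_elt scale_scaled_word r s)

lemma cong_J_unit_chain:
  "cong_J (word_elt w) (scaled_word (scalar p n a) w') \<Longrightarrow> cong_J (word_elt w') (scaled_word (scalar p n b) w'') \<Longrightarrow>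
   cong_J (word_elt w) (scaled_word (scalar p n (a * b)) w'')"
  using cong_J_word_chain[OF _ _ scalar_Rset scalar_Rset] by (simp add: scalar_mult)

lemma cong_J_unit_inverse:
  assumes "cong_J (word_elt w) (scaled_word (scalar p n \<kappa>) w')" "\<kappa> \<noteq> 0"
  shows "cong_J (word_elt w') (scaled_word (scalar p n (inverse \<kappa>)) w)"
  using cong_J_scale[OF scalar_Rset cong_J_sym[OF assms(1)], of "inverse \<kappa>"] assms(2)
  by (simp add: scale_scaled_word scale_word_elt scalar_Rset scalar_mult flip: scalar_1)

lemma word_elt_in_context: "r \<in> Rset p n \<Longrightarrow>
   Fmul p n \<gamma> (word_elt u) (Fmul p n \<gamma> (scaled_word r w) (word_elt v)) = scaled_word (sig_word p n \<gamma> u r) (u @ w @ v)"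
  by (simp add: Fmul_scaled_word Rset_oneR sig_word_oneR Rset_mul_oneR Rset_oneR_mul sig_word_Rset)

lemma relation_in_context:
  assumes J: "Fadd (word_elt A) (scaled_word b B) \<in> Jgen p n m \<gamma>" and b: "b \<in> Rset p n"
    and words: "word_over m u" "word_over m v" "word_over m A" "word_over m B"
  shows "cong_J (word_elt (u @ A @ v)) (scaled_word (\<lambda>x. - sig_word p n \<gamma> u b x) (u @ B @ v))"
proof -
  have "Fmul p n \<gamma> (word_elt u) (Fmul p n \<gamma> (Fadd (word_elt A) (scaled_word b B)) (word_elt v)) \<in> Jgen p n m \<gamma>"
    using J words by (intro Jgen.lmul Jgen.rmul word_elt_Fset)
  moreover have "Fmul p n \<gamma> (word_elt u) (Fmul p n \<gamma> (Fadd (word_elt A) (scaled_word b B)) (word_elt v))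
     = Fadd (word_elt (u @ A @ v)) (Fneg (scaled_word (\<lambda>x. - sig_word p n \<gamma> u b x) (u @ B @ v)))"
  proof -
    have "Fmul p n \<gamma> (word_elt u) (Fmul p n \<gamma> (Fadd (word_elt A) (scaled_word b B)) (word_elt v))
       = Fadd (Fmul p n \<gamma> (word_elt u) (Fmul p n \<gamma> (word_elt A) (word_elt v)))
              (Fmul p n \<gamma> (word_elt u) (Fmul p n \<gamma> (scaled_word b B) (word_elt v)))"
    proof -
      have "Fmul p n \<gamma> (word_elt A) (word_elt v) \<in> Fset p n m" "Fmul p n \<gamma> (scaled_word b B) (word_elt v) \<in> Fset p n m"
        using words b by (simp_all add: Fmul_Fset word_elt_Fset scaled_word_Fset)
      from Fmul_add_right[OF this] show ?thesis by (simp add: Fmul_add_left)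
    qed
    also have "\<dots> = Fadd (word_elt (u @ A @ v)) (scaled_word (sig_word p n \<gamma> u b) (u @ B @ v))"
      using b by (simp only: word_elt_in_context Rset_oneR sig_word_oneR)
    finally show ?thesis by (simp add: Fneg_scaled_word)
  qed
  ultimately show ?thesis
    using words b by (simp add: cong_J_def word_elt_Fset scaled_word_Fset Rset_neg sig_word_Rset)
qed

lemma rel_XY_YX_Jgen: "i \<in> {1..m} \<Longrightarrow> j \<in> {1..m} \<Longrightarrow> i \<noteq> j \<Longrightarrow>
   Fadd (word_elt [(True, i), (False, j)]) (scaled_word (scalar p n (- mu p n \<gamma> i j)) [(False, j), (True, i)])
     \<in> Jgen p n m \<gamma>"
  by (rule Jgen.rel) (auto simp: rels_def scaled_word_pair_eq_Fadd scalar_def)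

lemma rel_cancel_Jgen: "i \<in> {1..m} \<Longrightarrow> \<exists>t. t \<in> Rset p n \<and>
   Fadd (word_elt [(b, i), (\<not> b, i)]) (scaled_word (\<lambda>v. - t v) []) \<in> Jgen p n m \<gamma>"
proof (cases b)
  case True
  assume "i \<in> {1..m}"
  then have "Fadd (word_elt [(True, i), (False, i)]) (scaled_word (\<lambda>v. - sig p n \<gamma> i (tt p n \<gamma> i) v) [])
      \<in> Jgen p n m \<gamma>"
    by (intro Jgen.rel) (auto simp: rels_def scaled_word_pair_eq_Fadd)
  moreover have "sig p n \<gamma> i (tt p n \<gamma> i) \<in> Rset p n" by (simp add: sig_eq_pullback tt_Rset pullback_Rset)
  ultimately show ?thesis using True by auto
next
  case False
  assume "i \<in> {1..m}"
  then have "Fadd (word_elt [(False, i), (True, i)]) (scaled_word (\<lambda>v. - tt p n \<gamma> i v) []) \<in> Jgen p n m \<gamma>"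
    by (intro Jgen.rel) (auto simp: rels_def scaled_word_pair_eq_Fadd)
  then show ?thesis using False tt_Rset[of p n \<gamma> i] by auto
qed

lemma cancel_pair_in_context:
  assumes "i \<in> {1..m}" "word_over m u" "word_over m v"
  shows "\<exists>r. r \<in> Rset p n \<and> cong_J (word_elt (u @ [(b, i), (\<not> b, i)] @ v)) (scaled_word r (u @ v) :: 'k::field elt)"
proof -
  obtain t :: "(nat \<Rightarrow> 'k) \<Rightarrow> 'k" where t: "t \<in> Rset p n" "Fadd (word_elt [(b, i), (\<not> b, i)]) (scaled_word (\<lambda>v. - t v) []) \<in> Jgen p n m \<gamma>"
    using rel_cancel_Jgen[OF assms(1)] by blast
  have "cong_J (word_elt (u @ [(b, i), (\<not> b, i)] @ v)) (scaled_word (\<lambda>x. - sig_word p n \<gamma> u (\<lambda>v. - t v) x) (u @ v))"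
    using relation_in_context[OF t(2) Rset_neg[OF t(1)]] assms by simp
  moreover have "(\<lambda>x. - sig_word p n \<gamma> u (\<lambda>v. - t v) x) \<in> Rset p n"
    by (intro Rset_neg sig_word_Rset Rset_neg t(1))
  ultimately show ?thesis by blast
qed

lemma skew_commute_in_context:
  assumes "skew_commuting l a" "snd l \<in> {1..m}" "snd a \<in> {1..m}" "word_over m u" "word_over m v"
  shows "\<exists>\<kappa>::'k::field. \<kappa> \<noteq> 0 \<and> cong_J (word_elt (u @ [l, a] @ v)) (scaled_word (scalar p n \<kappa>) (u @ [a, l] @ v))"
proof -
  have XY_YX: "cong_J (word_elt (u @ [(True, i), (False, j)] @ v)) (scaled_word (scalar p n (mu p n \<gamma> i j :: 'k)) (u @ [(False, j), (True, i)] @ v))"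
    if "i \<in> {1..m}" "j \<in> {1..m}" "i \<noteq> j" for i j
  proof -
    have "word_over m [(True, i), (False, j)]" "word_over m [(False, j), (True, i)]"
      using that by simp_all
    from relation_in_context[OF rel_XY_YX_Jgen[OF that] scalar_Rset assms(4,5) this]
    show ?thesis by (simp only: sig_word_scalar) (simp add: scalar_def)
  qed
  have mu: "mu p n \<gamma> i j \<noteq> (0::'k)" for i j by (simp add: mu_def)
  obtain b i c j where la: "l = (b, i)" "a = (c, j)" by fastforce
  with assms(1-3) have ij: "i \<noteq> j" "c = (\<not> b)" "i \<in> {1..m}" "j \<in> {1..m}" by (auto simp: skew_commuting_def)
  show ?thesis
  proof (cases b)
    case True
    then show ?thesis using XY_YX[OF ij(3,4,1)] mu la ij by auto
  next
    case False
    then show ?thesis using cong_J_unit_inverse[OF XY_YX[OF ij(4,3) ij(1)[symmetric]] mu] mu la ij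
      by (intro exI[of _ "inverse (mu p n \<gamma> j i)"]) auto
  qed
qed

lemma move_right_past_skew_commuting:
  assumes "\<forall>a\<in>set A. skew_commuting l a" "word_over m (l # A)" "word_over m u" "word_over m v"
  shows "\<exists>\<kappa>::'k::field. \<kappa> \<noteq> 0 \<and> cong_J (word_elt (u @ l # A @ v)) (scaled_word (scalar p n \<kappa>) (u @ A @ l # v))"
  using assms
proof (induction A arbitrary: u)
  case Nil
  then show ?case using cong_J_refl[OF word_elt_Fset, of "u @ l # v"] by (intro exI[of _ 1]) (simp add: scalar_1)
next
  case (Cons a A)
  obtain \<kappa>0 :: 'k where "\<kappa>0 \<noteq> 0" "cong_J (word_elt (u @ [l, a] @ (A @ v))) (scaled_word (scalar p n \<kappa>0) (u @ [a, l] @ (A @ v)))"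
    using skew_commute_in_context[of l a u "A @ v"] Cons.prems by auto
  moreover obtain \<kappa>1 :: 'k where "\<kappa>1 \<noteq> 0" "cong_J (word_elt ((u @ [a]) @ l # A @ v)) (scaled_word (scalar p n \<kappa>1) ((u @ [a]) @ A @ l # v))"
    using Cons.IH[of "u @ [a]"] Cons.prems by auto
  ultimately show ?case
    using cong_J_unit_chain[of "u @ [l, a] @ A @ v" \<kappa>0 "u @ [a, l] @ A @ v" \<kappa>1]
    by (intro exI[of _ "\<kappa>0 * \<kappa>1"]) simp
qed

lemma move_left_past_skew_commuting:
  assumes "\<forall>a\<in>set A. skew_commuting l a" "word_over m (l # A)" "word_over m u" "word_over m v"
  shows "\<exists>\<kappa>::'k::field. \<kappa> \<noteq> 0 \<and> cong_J (word_elt (u @ A @ l # v)) (scaled_word (scalar p n \<kappa>) (u @ l # A @ v))"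
proof -
  obtain \<kappa> :: 'k where "\<kappa> \<noteq> 0" "cong_J (word_elt (u @ l # A @ v)) (scaled_word (scalar p n \<kappa>) (u @ A @ l # v))"
    using move_right_past_skew_commuting[OF assms] by blast
  then show ?thesis using cong_J_unit_inverse by (intro exI[of _ "inverse \<kappa>"]) simp
qed

text \<open>In a reduced word, letters of different type have different indices, hence skew-commute;
  so the letters of one type can be moved in front of those of the other.\<close>

lemma reduced_word_sort:
  assumes "reduced w" "word_over m w" "word_over m u" "word_over m v"
  shows "\<exists>\<kappa>::'k::field. \<kappa> \<noteq> 0 \<and> cong_J (word_elt (u @ w @ v))
           (scaled_word (scalar p n \<kappa>) (u @ filter (\<lambda>l. fst l = c) w @ filter (\<lambda>l. fst l \<noteq> c) w @ v))"
  using assms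
proof (induction w arbitrary: u)
  case Nil
  then show ?case using cong_J_refl[OF word_elt_Fset, of "u @ v"] by (intro exI[of _ 1]) (simp add: scalar_1)
next
  case (Cons l w)
  let ?C = "filter (\<lambda>l. fst l = c) w" and ?N = "filter (\<lambda>l. fst l \<noteq> c) w"
  obtain \<kappa>1 :: 'k where k1: "\<kappa>1 \<noteq> 0" "cong_J (word_elt ((u @ [l]) @ w @ v)) (scaled_word (scalar p n \<kappa>1) ((u @ [l]) @ ?C @ ?N @ v))"
    using Cons.IH[of "u @ [l]"] Cons.prems reduced_subset[of "l # w" w] by auto
  show ?case
  proof (cases "fst l = c")
    case True
    then show ?thesis using k1 by auto
  next
    case False
    have skew: "\<forall>a\<in>set ?C. skew_commuting l a"
    proof
      fix a assume "a \<in> set ?C"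
      then have "a \<in> set w" "fst a = c" by simp_all
      moreover have "(\<not> fst l, snd l) \<notin> set (l # w)"
        using reduced_opposite_letter[OF Cons.prems(1), of "fst l" "snd l"] by simp
      ultimately have "a \<noteq> (\<not> fst l, snd l)" "fst a \<noteq> fst l" using False by auto
      then show "skew_commuting l a" using \<open>fst a = c\<close> False by (cases a) (auto simp: skew_commuting_def)
    qed
    have "word_over m (l # ?C)" "word_over m (?N @ v)" using Cons.prems by (auto simp: word_over_def)
    then obtain \<kappa>2 :: 'k where "\<kappa>2 \<noteq> 0" "cong_J (word_elt (u @ l # ?C @ (?N @ v))) (scaled_word (scalar p n \<kappa>2) (u @ ?C @ l # (?N @ v)))"
      using move_right_past_skew_commuting[OF skew _ Cons.prems(3)] by blast
    with k1 False show ?thesis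
      using cong_J_unit_chain[of "u @ (l # w) @ v" \<kappa>1 "u @ l # ?C @ ?N @ v" \<kappa>2]
      by (intro exI[of _ "\<kappa>1 * \<kappa>2"]) simp
  qed
qed

text \<open>In \<open>u (b,i) x (\<not>b,i) v\<close> with \<open>x\<close> reduced and free of \<open>i\<close>, the letters of \<open>x\<close> of type \<open>\<not>b\<close>
  skew-commute with \<open>(b,i)\<close> and those of type \<open>b\<close> with \<open>(\<not>b,i)\<close>; sorting \<open>x\<close> accordingly brings
  the pair together.\<close>

lemma bring_pair_together:
  assumes w: "word_over m (u @ [(b, i)] @ x @ [(\<not> b, i)] @ v)" and x: "reduced x" "\<forall>l\<in>set x. snd l \<noteq> i"
  defines "A \<equiv> filter (\<lambda>l. fst l = (\<not> b)) x" and "B \<equiv> filter (\<lambda>l. fst l \<noteq> (\<not> b)) x"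
  shows "\<exists>\<kappa>::'k::field. \<kappa> \<noteq> 0 \<and> cong_J (word_elt (u @ [(b, i)] @ x @ [(\<not> b, i)] @ v))
           (scaled_word (scalar p n \<kappa>) (u @ A @ [(b, i), (\<not> b, i)] @ B @ v))"
proof -
  have words: "word_over m u" "word_over m v" "word_over m x" "i \<in> {1..m}" "word_over m A" "word_over m B"
    using w by (auto simp: A_def B_def word_over_def)
  obtain \<kappa>1 :: 'k where k1: "\<kappa>1 \<noteq> 0"
    "cong_J (word_elt ((u @ [(b, i)]) @ x @ ([(\<not> b, i)] @ v))) (scaled_word (scalar p n \<kappa>1) ((u @ [(b, i)]) @ A @ B @ ([(\<not> b, i)] @ v)))"
    using reduced_word_sort[OF x(1) words(3), of "u @ [(b, i)]" "[(\<not> b, i)] @ v" "\<not> b"] words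
    by (auto simp: A_def B_def)
  have skew: "\<forall>a\<in>set A. skew_commuting (b, i) a" "\<forall>a\<in>set B. skew_commuting (\<not> b, i) a"
    using x(2) by (auto simp: A_def B_def skew_commuting_def)
  have more_words: "word_over m ((b, i) # A)" "word_over m (B @ [(\<not> b, i)] @ v)"
    "word_over m ((\<not> b, i) # B)" "word_over m (u @ A @ [(b, i)])"
    using words by simp_all
  obtain \<kappa>2 :: 'k where k2: "\<kappa>2 \<noteq> 0"
      "cong_J (word_elt (u @ (b, i) # A @ (B @ [(\<not> b, i)] @ v))) (scaled_word (scalar p n \<kappa>2) (u @ A @ (b, i) # (B @ [(\<not> b, i)] @ v)))"
    using move_right_past_skew_commuting[OF skew(1) more_words(1) words(1) more_words(2)] by blast
  obtain \<kappa>3 :: 'k where k3: "\<kappa>3 \<noteq> 0"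
      "cong_J (word_elt ((u @ A @ [(b, i)]) @ B @ (\<not> b, i) # v)) (scaled_word (scalar p n \<kappa>3) ((u @ A @ [(b, i)]) @ (\<not> b, i) # B @ v))"
    using move_left_past_skew_commuting[OF skew(2) more_words(3,4) words(2)] by blast
  have "cong_J (word_elt (u @ [(b, i)] @ x @ [(\<not> b, i)] @ v)) (scaled_word (scalar p n (\<kappa>1 * \<kappa>2)) (u @ A @ (b, i) # (B @ [(\<not> b, i)] @ v)))"
    using cong_J_unit_chain[of "u @ [(b, i)] @ x @ [(\<not> b, i)] @ v" \<kappa>1 "u @ (b, i) # A @ (B @ [(\<not> b, i)] @ v)" \<kappa>2] k1 k2
    by simp
  then have "cong_J (word_elt (u @ [(b, i)] @ x @ [(\<not> b, i)] @ v)) (scaled_word (scalar p n (\<kappa>1 * \<kappa>2 * \<kappa>3)) (u @ A @ [(b, i), (\<not> b, i)] @ B @ v))"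
    using cong_J_unit_chain[of _ "\<kappa>1 * \<kappa>2" _ \<kappa>3 "(u @ A @ [(b, i)]) @ (\<not> b, i) # B @ v"] k3 by simp
  with k1 k2 k3 show ?thesis by (intro exI[of _ "\<kappa>1 * \<kappa>2 * \<kappa>3"]) simp
qed

lemma cancel_innermost_pair:
  assumes w: "word_over m w" and decomp: "w = u @ [(b, i)] @ x @ [(\<not> b, i)] @ v"
    and x: "reduced x" "\<forall>l\<in>set x. snd l \<noteq> i"
  shows "\<exists>r w'. r \<in> Rset p n \<and> cong_J (word_elt w) (scaled_word r w' :: 'k::field elt)
     \<and> word_over m w' \<and> length w' < length w \<and> wdeg w' = wdeg w"
proof -
  define A where "A = filter (\<lambda>l. fst l = (\<not> b)) x"
  define B where "B = filter (\<lambda>l. fst l \<noteq> (\<not> b)) x"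
  have words: "word_over m (u @ A)" "word_over m (B @ v)" "i \<in> {1..m}"
    using w decomp by (auto simp: A_def B_def word_over_def)
  obtain \<kappa> :: 'k where k: "cong_J (word_elt w) (scaled_word (scalar p n \<kappa>) (u @ A @ [(b, i), (\<not> b, i)] @ B @ v))"
    using bring_pair_together[OF w[unfolded decomp] x] unfolding decomp A_def B_def by (elim exE conjE)
  obtain r :: "(nat \<Rightarrow> 'k) \<Rightarrow> 'k" where r: "r \<in> Rset p n" "cong_J (word_elt ((u @ A) @ [(b, i), (\<not> b, i)] @ (B @ v))) (scaled_word r ((u @ A) @ (B @ v)))"
    using cancel_pair_in_context[OF words(3,1,2)] by blast
  have chain: "cong_J (word_elt w) (scaled_word (\<lambda>x. scalar p n \<kappa> x * r x) (u @ A @ B @ v))"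
  proof -
    have "cong_J (word_elt (u @ A @ [(b, i), (\<not> b, i)] @ B @ v)) (scaled_word r (u @ A @ B @ v))"
      using r(2) by simp
    then show ?thesis by (rule cong_J_word_chain[OF k _ scalar_Rset r(1)])
  qed
  have "mset x = mset (A @ B)"
    unfolding A_def B_def mset_append mset_filter by (rule multiset_partition)
  then have "wdeg w = wdeg (((u @ A) @ (B @ v)) @ [(b, i), (\<not> b, i)])"
    using decomp by (intro wdeg_mset) simp
  then have "wdeg w = wdeg ((u @ A) @ (B @ v))"
    by (simp add: wdeg_append wdeg_cancelling_pair)
  moreover have "length (u @ A @ B @ v) < length w"
    using decomp sum_length_filter_compl[of "\<lambda>l. fst l = (\<not> b)" x] by (simp add: A_def B_def)
  moreover have "(\<lambda>x. scalar p n \<kappa> x * r x) \<in> Rset p n" by (rule Rset_mul[OF scalar_Rset r(1)])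
  ultimately show ?thesis using chain words(1,2) by (intro exI[of _ "\<lambda>x. scalar p n \<kappa> x * r x"] exI[of _ "u @ A @ B @ v"]) simp
qed

definition reduced_elts :: "(nat \<Rightarrow> int) \<Rightarrow> 'k::field elt set" where
  "reduced_elts g = {d \<in> Fset p n m. \<forall>w\<in>support d. reduced w \<and> wdeg w = g}"

lemma scale_reduced_elts: "d \<in> reduced_elts g \<Longrightarrow> r \<in> Rset p n \<Longrightarrow> Fmul p n \<gamma> (scaled_word r []) d \<in> reduced_elts g"
proof -
  assume d: "d \<in> reduced_elts g" and r: "r \<in> Rset p n"
  then have "Fmul p n \<gamma> (scaled_word r []) d \<in> Fset p n m"
    by (intro Fmul_Fset scaled_word_Fset) (simp_all add: reduced_elts_def)
  moreover have "support (Fmul p n \<gamma> (scaled_word r []) d) \<subseteq> support d"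
    by (auto simp: support_def Fmul_scalar_left)
  ultimately show ?thesis using d by (auto simp: reduced_elts_def)
qed

lemma Fadd_reduced_elts: "d \<in> reduced_elts g \<Longrightarrow> e \<in> reduced_elts g \<Longrightarrow> Fadd d e \<in> reduced_elts g"
  using support_Fadd[of d e] by (auto simp: reduced_elts_def Fadd_Fset)

lemma word_cong_reduced: "word_over m w \<Longrightarrow> \<exists>d \<in> (reduced_elts (wdeg w) :: 'k::field elt set). cong_J (word_elt w) d"
proof (induction "length w" arbitrary: w rule: less_induct)
  case less
  show ?case
  proof (cases "reduced w")
    case True
    with less.prems show ?thesis
      by (intro bexI[of _ "word_elt w"] cong_J_refl word_elt_Fset)
         (auto simp: reduced_elts_def word_elt_Fset dest: subsetD[OF support_scaled_word])
  next
    case False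
    then obtain u b i x v where "w = u @ [(b, i)] @ x @ [(\<not> b, i)] @ v" "reduced x" "\<forall>l\<in>set x. snd l \<noteq> i"
      using not_reduced_decomp by blast
    then obtain r :: "(nat \<Rightarrow> 'k) \<Rightarrow> 'k" and w' where r: "r \<in> Rset p n" and w': "cong_J (word_elt w) (scaled_word r w')"
      "word_over m w'" "length w' < length w" "wdeg w' = wdeg w"
      using cancel_innermost_pair[OF less.prems] by blast
    obtain d' :: "'k elt" where d': "d' \<in> reduced_elts (wdeg w')" "cong_J (word_elt w') d'"
      using less.hyps w'(2,3) by blast
    have "cong_J (scaled_word r w') (Fmul p n \<gamma> (scaled_word r []) d')"
      using cong_J_scale[OF r d'(2)] by (simp add: scale_word_elt r)
    then have "cong_J (word_elt w) (Fmul p n \<gamma> (scaled_word r []) d')"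
      using w'(1) cong_J_trans by blast
    moreover have "Fmul p n \<gamma> (scaled_word r []) d' \<in> reduced_elts (wdeg w)"
      using scale_reduced_elts[OF d'(1) r] w'(4) by simp
    ultimately show ?thesis by blast
  qed
qed

lemma Fset_induct [consumes 1, case_names empty remove]:
  assumes "c \<in> Fset p n m"
    and empty: "\<And>c. c \<in> Fset p n m \<Longrightarrow> support c = {} \<Longrightarrow> P c"
    and remove: "\<And>c w. c \<in> Fset p n m \<Longrightarrow> w \<in> support c \<Longrightarrow> P (c(w := (\<lambda>v. 0))) \<Longrightarrow> P c"
  shows "P c"
proof -
  have "finite (support c)" using assms(1) by (rule finite_support)
  then show ?thesis
    using assms(1)
  proof (induction "support c" arbitrary: c rule: finite_induct)
    case empty
    then show ?case using assms(2) by simp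
  next
    case (insert w S)
    have "support (c(w := (\<lambda>v. 0))) = S" using insert.hyps(2,4) by (auto simp: support_def)
    moreover have "c(w := (\<lambda>v. 0)) \<in> Fset p n m" using insert.prems by (rule Fset_remove)
    ultimately have "P (c(w := (\<lambda>v. 0)))" using insert.hyps(3) by blast
    then show ?case using remove insert.prems insert.hyps(4) by blast
  qed
qed

lemma hom_cong_reduced: "c \<in> Fhom p n m g \<Longrightarrow> \<exists>d \<in> reduced_elts g. cong_J c (d :: 'k::field elt)"
proof -
  assume "c \<in> Fhom p n m g"
  then have c: "c \<in> Fset p n m" "\<forall>w\<in>support c. wdeg w = g" by (auto simp: Fhom_def support_def)
  then show ?thesis
  proof (induction c rule: Fset_induct)
    case (empty c)
    then have "c = Fzero" by (auto simp: support_def Fzero_def)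
    moreover have "Fzero \<in> reduced_elts g" by (simp add: reduced_elts_def Fzero_Fset support_Fzero)
    ultimately show ?case using Fzero_Fset cong_J_refl by blast
  next
    case (remove c w)
    obtain d' :: "'k elt" where d': "d' \<in> reduced_elts g" "cong_J (c(w := (\<lambda>v. 0))) d'"
    proof -
      have "\<forall>w'\<in>support (c(w := (\<lambda>v. 0))). wdeg w' = g" using remove.prems by (simp add: support_def)
      then show ?thesis using remove.IH that by blast
    qed
    have w: "word_over m w" "wdeg w = g" and cw: "c w \<in> Rset p n"
      using remove.hyps remove.prems by (auto simp: Fset_def support_def word_over_def)
    obtain d1 :: "'k elt" where d1: "d1 \<in> reduced_elts g" "cong_J (word_elt w) d1"
      using word_cong_reduced[OF w(1)] w(2) by blast
    have "cong_J (scaled_word (c w) w) (Fmul p n \<gamma> (scaled_word (c w) []) d1)"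
      using cong_J_scale[OF cw d1(2)] by (simp add: scale_word_elt cw)
    moreover have "c = Fadd (scaled_word (c w) w) (c(w := (\<lambda>v. 0)))"
      by (auto simp: Fadd_def scaled_word_def)
    ultimately have "cong_J c (Fadd (Fmul p n \<gamma> (scaled_word (c w) []) d1) d')"
      using cong_J_add[OF _ d'(2)] by metis
    moreover have "Fadd (Fmul p n \<gamma> (scaled_word (c w) []) d1) d' \<in> reduced_elts g"
      by (intro Fadd_reduced_elts scale_reduced_elts d1(1) d'(1) cw)
    ultimately show ?case by blast
  qed
qed

lemma deg0_cong_scalar: "c \<in> Fhom p n m (\<lambda>i. 0) \<Longrightarrow> \<exists>r. r \<in> Rset p n \<and> cong_J c (scaled_word r [] :: 'k::field elt)"
proof -
  assume "c \<in> Fhom p n m (\<lambda>i. 0)"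
  then obtain d :: "'k elt" where d: "d \<in> reduced_elts (\<lambda>i. 0)" "cong_J c d" using hom_cong_reduced by blast
  then have "d = scaled_word (d []) []"
    using reduced_wdeg_0 by (fastforce simp: reduced_elts_def support_def scaled_word_def)
  moreover have "d [] \<in> Rset p n" using d(1) by (simp add: reduced_elts_def Fset_def)
  ultimately show ?thesis using d(2) by metis
qed

definition act_kernel :: "'k::field elt set" where
  "act_kernel = {c \<in> Fset p n m. \<forall>f y h. act c f y h = 0}"

lemma act_cong_J: "cong_J c d \<Longrightarrow> act c f y h = act d f y h"
proof -
  assume cd: "cong_J c d"
  then have "act (Fadd c (Fneg d)) f y h = 0" by (simp add: cong_J_def Jgen_act_zero)
  with cd show ?thesis by (simp add: cong_J_def act_Fadd Fneg_Fset act_Fneg)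
qed

lemma hcomp_Fset: "c \<in> Fset p n m \<Longrightarrow> hcomp g c \<in> Fset p n m"
proof -
  have "{w. hcomp g c w \<noteq> (\<lambda>v. 0)} \<subseteq> {w. c w \<noteq> (\<lambda>v. 0)}" by (auto simp: hcomp_def)
  then show "c \<in> Fset p n m \<Longrightarrow> ?thesis" by (auto simp: Fset_def hcomp_def Rset_zero intro: finite_subset)
qed

lemma act_hcomp: "c \<in> Fset p n m \<Longrightarrow>
   act (hcomp g c) f y h = act c (\<lambda>y' h'. if h' = (\<lambda>j. h j - g j) then f y' h' else 0) y h"
proof -
  assume c: "c \<in> Fset p n m"
  have "support (hcomp g c) \<subseteq> support c" by (auto simp: support_def hcomp_def)
  then have "act (hcomp g c) f y h = (\<Sum>w\<in>support c. hcomp g c w y * act_word w f y h)"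
    by (rule act_superset[OF finite_support[OF c]])
  also have "\<dots> = (\<Sum>w\<in>support c. c w y * act_word w (\<lambda>y' h'. if h' = (\<lambda>j. h j - g j) then f y' h' else 0) y h)"
    by (rule sum.cong) (auto simp: hcomp_def act_word_def fun_eq_iff)
  finally show ?thesis by (simp add: act_def)
qed

lemma act_kernel_admissible: "admissible p n m \<gamma> (act_kernel :: 'k::field elt set)"
proof -
  have "graded_ideal p n m \<gamma> (act_kernel :: 'k elt set)"
    unfolding graded_ideal_def
  proof (intro conjI ballI allI)
    fix c a :: "'k elt" assume c: "c \<in> Fset p n m" and a: "a \<in> act_kernel"
    then have "act a f = (\<lambda>y h. 0)" for f by (auto simp: act_kernel_def intro!: ext)
    with a c show "Fmul p n \<gamma> c a \<in> act_kernel" "Fmul p n \<gamma> a c \<in> act_kernel"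
      by (simp_all add: act_kernel_def Fmul_Fset act_Fmul act_zero_fun)
  qed (auto simp: act_kernel_def Fzero_Fset act_Fzero Fadd_Fset act_Fadd hcomp_Fset act_hcomp)
  moreover have "Jgen p n m \<gamma> \<subseteq> (act_kernel :: 'k elt set)" using Jgen_act_zero by (auto simp: act_kernel_def)
  moreover have "(act_kernel :: 'k elt set) \<inter> Fhom p n m (\<lambda>i. 0) \<subseteq> Jgen p n m \<gamma>"
  proof
    fix c :: "'k elt" assume "c \<in> act_kernel \<inter> Fhom p n m (\<lambda>i. 0)"
    then have c: "c \<in> act_kernel" "c \<in> Fhom p n m (\<lambda>i. 0)" by auto
    obtain r :: "(nat \<Rightarrow> 'k) \<Rightarrow> 'k" where r: "r \<in> Rset p n" "cong_J c (scaled_word r [])" using deg0_cong_scalar[OF c(2)] by blast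
    text \<open>On degree zero the action is multiplication by the coefficient, so \<open>r = 0\<close>.\<close>
    have "r y = 0" for y
      using act_cong_J[OF r(2), of "\<lambda>y h. 1" y "\<lambda>j. 0"] c(1) by (simp add: act_kernel_def act_scaled_word act_word_def)
    then have "scaled_word r [] = Fzero" by (auto simp: scaled_word_def Fzero_def fun_eq_iff)
    moreover have "Fadd c (Fneg Fzero) = c" by (simp add: Fadd_def Fneg_def Fzero_def)
    ultimately show "c \<in> Jgen p n m \<gamma>" using r(2) by (simp add: cong_J_def)
  qed
  ultimately show ?thesis by (simp add: admissible_def)
qed

lemma act_kernel_subset_Imax: "(act_kernel :: 'k::field elt set) \<subseteq> Imax p n m \<gamma>"
  using act_kernel_admissible by (auto simp: Imax_def)
end

section \<open>Alternating sign sequences\<close>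

text \<open>The state
  models an odd coordinate \<open>y\<^sub>r \<in> {0, 1}\<close> (as \<open>y\<^sub>r = 1\<close>) along a word.\<close>

fun alternating :: "bool \<Rightarrow> int list \<Rightarrow> bool" where
  "alternating s [] = True"
| "alternating s (e # es) = (if e = 0 then alternating s es else if e = 1 then \<not> s \<and> alternating True es
                              else if e = -1 then s \<and> alternating False es else False)"

fun alt_state :: "bool \<Rightarrow> int list \<Rightarrow> bool" where
  "alt_state s [] = s"
| "alt_state s (e # es) = alt_state (if e = 1 then True else if e = -1 then False else s) es"

fun first_nonzero :: "int list \<Rightarrow> int" where
  "first_nonzero [] = 0"
| "first_nonzero (e # es) = (if e = 0 then first_nonzero es else e)"

lemma alternating_append: "alternating s (a @ b) \<longleftrightarrow> alternating s a \<and> alternating (alt_state s a) b"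
  by (induction a arbitrary: s) auto

lemma alt_state_append: "alt_state s (a @ b) = alt_state (alt_state s a) b"
  by (induction a arbitrary: s) auto

lemma alternating_rev_uminus:
  "alternating s es \<Longrightarrow> alternating (alt_state s es) (rev (map uminus es)) \<and> alt_state (alt_state s es) (rev (map uminus es)) = s"
  by (induction es arbitrary: s) (auto simp: alternating_append alt_state_append split: if_splits)

lemma alternating_first_nonzero:
  "alternating s es \<Longrightarrow> (first_nonzero es = 1 \<longrightarrow> \<not> s) \<and> (first_nonzero es = -1 \<longrightarrow> s)"
  by (induction es arbitrary: s) (auto split: if_splits)

lemma first_nonzero_eq_iff:
  "e \<noteq> 0 \<Longrightarrow> first_nonzero es = e \<longleftrightarrow> (\<exists>j<length es. es ! j = e \<and> (\<forall>i<j. es ! i = 0))"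
proof (induction es)
  case (Cons x es)
  show ?case
  proof (cases "x = 0")
    case True
    have "(\<exists>j<length (x # es). (x # es) ! j = e \<and> (\<forall>i<j. (x # es) ! i = 0))
        \<longleftrightarrow> (\<exists>j<length es. es ! j = e \<and> (\<forall>i<j. es ! i = 0))"
    proof
      assume "\<exists>j<length (x # es). (x # es) ! j = e \<and> (\<forall>i<j. (x # es) ! i = 0)"
      then obtain j where j: "j < length (x # es)" "(x # es) ! j = e" "\<forall>i<j. (x # es) ! i = 0" by blast
      then obtain j' where "j = Suc j'" using True Cons.prems by (cases j) auto
      then show "\<exists>j<length es. es ! j = e \<and> (\<forall>i<j. es ! i = 0)"
        using j by (intro exI[of _ j']) auto
    next
      assume "\<exists>j<length es. es ! j = e \<and> (\<forall>i<j. es ! i = 0)"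
      then obtain j where j: "j < length es" "es ! j = e" "\<forall>i<j. es ! i = 0" by blast
      have "\<forall>i<Suc j. (x # es) ! i = 0" using j True by (auto simp: less_Suc_eq_0_disj)
      with j show "\<exists>j<length (x # es). (x # es) ! j = e \<and> (\<forall>i<j. (x # es) ! i = 0)"
        by (intro exI[of _ "Suc j"]) auto
    qed
    with True Cons show ?thesis by simp
  next
    case False
    then show ?thesis by (auto intro: exI[of _ 0] elim: less_SucE) (metis gr0I nth_Cons_0)
  qed
qed simp

definition bad_block :: "int list \<Rightarrow> nat \<Rightarrow> nat \<Rightarrow> bool" where
  "bad_block a k l \<longleftrightarrow> k < l \<and> l < length a \<and> a ! k = a ! l \<and> (a ! k = 1 \<or> a ! k = -1) \<and>
     (\<forall>j. k < j \<and> j < l \<longrightarrow> a ! j = 0)"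

lemma no_bad_block_iff: "no_bad_block a \<longleftrightarrow> \<not> (\<exists>k l. bad_block a k l)"
  unfolding no_bad_block_def bad_block_def by (rule refl)

lemma bad_block_Cons_Suc: "bad_block (e # es) (Suc k) (Suc l) \<longleftrightarrow> bad_block es k l"
  by (auto simp: bad_block_def less_Suc_eq_0_disj)

lemma ex_bad_block_Cons_Suc: "(\<exists>l. bad_block (e # es) (Suc k) l) \<longleftrightarrow> (\<exists>l. bad_block es k l)"
proof
  assume "\<exists>l. bad_block (e # es) (Suc k) l"
  then obtain l where b: "bad_block (e # es) (Suc k) l" ..
  then obtain l' where "l = Suc l'" by (cases l) (auto simp: bad_block_def)
  with b bad_block_Cons_Suc show "\<exists>l. bad_block es k l" by blast
qed (use bad_block_Cons_Suc in blast)

lemma ex_bad_block_Cons_0: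
  "(\<exists>l. bad_block (e # es) 0 l) \<longleftrightarrow> (e = 1 \<or> e = -1) \<and> first_nonzero es = e"
proof
  assume "\<exists>l. bad_block (e # es) 0 l"
  then obtain l where l: "bad_block (e # es) 0 l" ..
  then obtain l' where l': "l = Suc l'" by (cases l) (auto simp: bad_block_def)
  with l have "\<forall>i<l'. es ! i = 0" by (auto simp: bad_block_def)
  with l l' show "(e = 1 \<or> e = -1) \<and> first_nonzero es = e"
    by (subst first_nonzero_eq_iff) (auto simp: bad_block_def)
next
  assume e: "(e = 1 \<or> e = -1) \<and> first_nonzero es = e"
  then obtain j where j: "j < length es" "es ! j = e" "\<forall>i<j. es ! i = 0"
    using first_nonzero_eq_iff[of e es] by auto
  then have "bad_block (e # es) 0 (Suc j)"
    using e by (auto simp: bad_block_def gr0_conv_Suc)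
  then show "\<exists>l. bad_block (e # es) 0 l" ..
qed

lemma no_bad_block_Cons:
  "no_bad_block (e # es) \<longleftrightarrow> no_bad_block es \<and> ((e = 1 \<or> e = -1) \<longrightarrow> first_nonzero es \<noteq> e)"
proof -
  have "(\<exists>k l. bad_block (e # es) k l) \<longleftrightarrow> (\<exists>l. bad_block (e # es) 0 l) \<or> (\<exists>k l. bad_block (e # es) (Suc k) l)"
    by (metis not0_implies_Suc)
  then show ?thesis
    unfolding no_bad_block_iff ex_bad_block_Cons_Suc ex_bad_block_Cons_0 by blast
qed

lemma alternating_no_bad_block: "alternating s es \<Longrightarrow> no_bad_block es"
proof (induction es arbitrary: s)
  case Nil
  then show ?case by (simp add: no_bad_block_def)
next
  case (Cons e es)
  then show ?case
    using alternating_first_nonzero[of True es] alternating_first_nonzero[of False es]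
    by (auto simp: no_bad_block_Cons split: if_splits)
qed

lemma no_bad_block_alternating:
  "no_bad_block es \<Longrightarrow> set es \<subseteq> {0, 1, -1} \<Longrightarrow> alternating (first_nonzero es = -1) es"
proof (induction es)
  case (Cons e es)
  then have IH: "alternating (first_nonzero es = -1) es" and e: "e = 0 \<or> e = 1 \<or> e = -1"
    by (auto simp: no_bad_block_Cons)
  have "first_nonzero es \<in> {0, 1, -1}"
    using Cons.prems(2) by (induction es) auto
  moreover have "alternating s es" if "first_nonzero es = 0" for s
    using that by (induction es) (auto split: if_splits)
  ultimately show ?case
    using IH e Cons.prems(1) by (auto simp: no_bad_block_Cons)
qed simp

definition signed_row :: "(nat \<Rightarrow> nat \<Rightarrow> int) \<Rightarrow> nat \<Rightarrow> letter list \<Rightarrow> int list" where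
  "signed_row \<gamma> r w = map (\<lambda>l. if fst l then \<gamma> r (snd l) else - \<gamma> r (snd l)) w"

lemma signed_row_simps [simp]:
  "signed_row \<gamma> r [] = []"
  "signed_row \<gamma> r (l # w) = (if fst l then \<gamma> r (snd l) else - \<gamma> r (snd l)) # signed_row \<gamma> r w"
  "signed_row \<gamma> r (u @ w) = signed_row \<gamma> r u @ signed_row \<gamma> r w"
  by (simp_all add: signed_row_def)

lemma signed_row_adjoint_word: "signed_row \<gamma> r (adjoint_word w) = rev (map uminus (signed_row \<gamma> r w))"
  by (simp add: signed_row_def adjoint_word_def rev_map)

context gamma_minus
begin

text \<open>At an odd coordinate \<open>r\<close> the coefficient of a letter is nonzero exactly when its signed
  entry is compatible with \<open>y\<^sub>r \<in> {0, 1}\<close>, and the letter then moves \<open>y\<^sub>r\<close> to the next state.\<close>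

lemma alternating_Cons_letter:
  assumes r: "p < r" "r \<le> n" and y: "y \<in> V" and i: "i \<in> {1..m}"
  shows "alternating (y r = 1) (signed_row \<gamma> r ((b, i) # u))
     \<longleftrightarrow> letter_coeff (b, i) r (y r) \<noteq> 0 \<and> alternating (letter_move (b, i) y r = 1) (signed_row \<gamma> r u)"
proof -
  have "y r = 0 \<or> y r = 1" using odd_coord[OF y r] .
  moreover have "\<gamma> r i = 0 \<or> \<gamma> r i = 1 \<or> \<gamma> r i = -1" using gamma_odd_entry[OF r i] .
  moreover have "letter_move (b, i) y r = shift_coord p r (if b then \<gamma> r i else - \<gamma> r i) (y r)"
    using r by (simp add: letter_move_coord)
  ultimately show ?thesis
    using r by (cases b) (auto simp: letter_coeff_def coeff_X_def coeff_Y_def shift_coord_def)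
qed

lemma even_letter_coeff_nonzero: "j \<le> p \<Longrightarrow> (x::'k::field_char_0) \<notin> \<int> \<Longrightarrow> letter_coeff l j x \<noteq> 0"
proof -
  assume "j \<le> p" "x \<notin> \<int>"
  moreover have "pochhammer x k \<noteq> 0" for k
    using \<open>x \<notin> \<int>\<close> by (auto simp: pochhammer_eq_0_iff)
  ultimately show ?thesis by (simp add: letter_coeff_def coeff_X_def coeff_Y_def)
qed

lemma letter_move_even_not_Ints: "1 \<le> j \<Longrightarrow> j \<le> p \<Longrightarrow> y j \<notin> \<int> \<Longrightarrow> letter_move l y j \<notin> \<int>"
  using p_le_n by (auto simp: letter_move_coord shift_coord_def)

lemma word_weight_nonzero_alternating:
  "word_over m w \<Longrightarrow> y \<in> V \<Longrightarrow> word_weight w y h \<noteq> 0 \<Longrightarrow> r \<in> {p<..n} \<Longrightarrow>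
   alternating (y r = 1) (signed_row \<gamma> r w)"
proof (induction w arbitrary: y h)
  case (Cons l u)
  obtain b i where l: "l = (b, i)" by fastforce
  have "letter_coeff l r (y r) \<noteq> 0"
    using Cons.prems(2-4) by (auto simp: letter_weight_in_V)
  moreover have "alternating (letter_move l y r = 1) (signed_row \<gamma> r u)"
    using Cons.IH[OF _ letter_move_V[OF Cons.prems(2), of l] _ Cons.prems(4)] Cons.prems(1,3) by auto
  ultimately show ?case
    using alternating_Cons_letter[of r y i b u] Cons.prems l by simp
qed simp

lemma alternating_word_weight_nonzero:
  "word_over m u \<Longrightarrow> (y :: nat \<Rightarrow> 'k::field_char_0) \<in> V \<Longrightarrow> (\<forall>j\<in>{1..p}. y j \<notin> \<int>) \<Longrightarrow>
   (\<forall>r\<in>{p<..n}. alternating (y r = 1) (signed_row \<gamma> r u)) \<Longrightarrow> word_weight u y h \<noteq> 0"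
proof (induction u arbitrary: y h)
  case (Cons l u)
  obtain b i where l: "l = (b, i)" by fastforce
  have i: "i \<in> {1..m}" using Cons.prems(1) l by simp
  have odd: "letter_coeff l r (y r) \<noteq> 0 \<and> alternating (letter_move l y r = 1) (signed_row \<gamma> r u)"
    if "r \<in> {p<..n}" for r
    using alternating_Cons_letter[of r y i b u] Cons.prems(2,4) that i l by auto
  have "letter_coeff l j (y j) \<noteq> 0" if "j \<in> {1..n}" for j
    using that odd even_letter_coeff_nonzero[of j "y j" l] Cons.prems(3) by (cases "j \<le> p") auto
  then have "letter_weight l y h \<noteq> 0"
    using Cons.prems(2) by (simp add: letter_weight_in_V sign_twist_def)
  moreover have "letter_move l y j \<notin> \<int>" if "j \<in> {1..p}" for j
    using that Cons.prems(3) by (intro letter_move_even_not_Ints) auto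
  then have "word_weight u (letter_move l y) (\<lambda>j. h j - letter_deg l j) \<noteq> 0"
    using Cons.prems(1) letter_move_V[OF Cons.prems(2), of l] odd by (intro Cons.IH) auto
  ultimately show ?case by simp
qed simp
end

definition good_sequence :: "nat \<Rightarrow> nat \<Rightarrow> nat \<Rightarrow> (nat \<Rightarrow> nat \<Rightarrow> int) \<Rightarrow> (nat \<Rightarrow> int) \<Rightarrow> nat list \<Rightarrow> bool" where
  "good_sequence p n m \<gamma> g s \<longleftrightarrow> set s \<subseteq> {1..m} \<and> (\<forall>i\<in>{1..m}. count (mset s) i = nat \<bar>g i\<bar>) \<and>
     (\<forall>r\<in>{p<..n}. no_bad_block (map (\<lambda>i. sgn (g i) * \<gamma> r i) s))"

lemma count_mset_map_snd: "count (mset (map snd w)) i = count (mset w) (True, i) + count (mset w) (False, i)"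
  by (induction w) auto

text \<open>In a reduced word each index carries the sign of its degree.\<close>

lemma reduced_word_index_sequence:
  assumes "reduced w"
  shows "count (mset (map snd w)) i = nat \<bar>wdeg w i\<bar>"
    and "map (\<lambda>i. sgn (wdeg w i) * \<gamma> r i) (map snd w) = signed_row \<gamma> r w"
proof -
  have zero: "count (mset w) (b, i) = 0 \<or> count (mset w) (\<not> b, i) = 0" for b i
    using assms by (cases b) (auto simp: reduced_def)
  show "count (mset (map snd w)) i = nat \<bar>wdeg w i\<bar>"
    unfolding count_mset_map_snd wdeg_count using zero[of True i] by (auto simp del: count_mset_0_iff)
  have "sgn (wdeg w i) = (if b then 1 else -1)" if "(b, i) \<in> set w" for b i
  proof -
    have pos: "count (mset w) (b, i) > 0" using that by simp
    then have "count (mset w) (\<not> b, i) = 0" using zero[of b i] by arith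
    with pos show ?thesis by (cases b) (simp_all add: wdeg_count del: count_mset_0_iff)
  qed
  then show "map (\<lambda>i. sgn (wdeg w i) * \<gamma> r i) (map snd w) = signed_row \<gamma> r w"
    by (auto simp: signed_row_def)
qed

lemma good_sequence_word:
  assumes "good_sequence p n m \<gamma> g s" "\<forall>i. i \<notin> {1..m} \<longrightarrow> g i = 0"
  defines "w \<equiv> map (\<lambda>i. (0 < g i, i)) s"
  shows "word_over m w" "wdeg w = g" "signed_row \<gamma> r w = map (\<lambda>i. sgn (g i) * \<gamma> r i) s"
proof -
  have s: "set s \<subseteq> {1..m}" "\<forall>i\<in>{1..m}. count (mset s) i = nat \<bar>g i\<bar>"
    using assms(1) by (auto simp: good_sequence_def)
  then show "word_over m w" by (auto simp: w_def word_over_def)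
  have count_w: "count (mset w) (b, j) = (if (0 < g j) = b then count (mset s) j else 0)" for b j
    unfolding w_def by (induction s) auto
  have "count (mset s) j = nat \<bar>g j\<bar>" for j
    using s assms(2) by (cases "j \<in> {1..m}") (auto simp: count_eq_zero_iff)
  then show "wdeg w = g"
    by (auto simp: fun_eq_iff wdeg_count count_w)
  have "g i \<noteq> 0" if "i \<in> set s" for i
    using that s by fastforce
  then show "signed_row \<gamma> r w = map (\<lambda>i. sgn (g i) * \<gamma> r i) s"
    by (auto simp: w_def signed_row_def sgn_if)
qed

lemma half_not_Ints: "(1 / 2 :: 'k::field_char_0) \<notin> \<int>"
proof
  assume "(1 / 2 :: 'k) \<in> \<int>"
  then obtain z where "(1 / 2 :: 'k) = of_int z" by (auto elim: Ints_cases)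
  then have "(of_int (2 * z) :: 'k) = of_int 1" by (simp add: field_simps)
  then have "2 * z = 1" by (simp only: of_int_eq_iff)
  then show False by presburger
qed

context gamma_minus
begin

lemma hom_subset_act_kernel:
  assumes "\<nexists>s. good_sequence p n m \<gamma> g s"
  shows "Fhom p n m g \<subseteq> (act_kernel :: 'k::field elt set)"
proof
  fix c :: "'k elt" assume c: "c \<in> Fhom p n m g"
  obtain d where d: "d \<in> reduced_elts g" "cong_J c d" using hom_cong_reduced[OF c] by blast
  text \<open>Every word \<open>w\<close> of \<open>d\<close> acts by zero: otherwise its index sequence would be good.\<close>
  have "word_weight w y h = 0" if w: "w \<in> support d" for w y h
  proof (rule ccontr)
    assume W: "word_weight w y h \<noteq> 0"
    have w_props: "reduced w" "wdeg w = g" "word_over m w"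
      using w d(1) by (auto simp: reduced_elts_def Fset_def support_def word_over_def)
    have "no_bad_block (signed_row \<gamma> r w)" if "r \<in> {p<..n}" for r
    proof (cases "w = []")
      case False
      have "alternating (y r = 1) (signed_row \<gamma> r w)"
        using word_weight_nonzero_alternating[OF w_props(3) word_weight_nonzero_V[OF W False] W that] .
      then show ?thesis by (rule alternating_no_bad_block)
    qed (simp add: no_bad_block_def)
    then have "good_sequence p n m \<gamma> g (map snd w)"
      using w_props reduced_word_index_sequence[OF w_props(1)]
      by (auto simp: good_sequence_def word_over_def)
    then show False using assms by blast
  qed
  then have "act d f y h = 0" for f y h
    by (auto simp: act_def act_word_def intro!: sum.neutral)
  then show "c \<in> act_kernel"
    using c act_cong_J[OF d(2)] by (simp add: act_kernel_def Fhom_def)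
qed

text \<open>For a word \<open>w\<close> without bad blocks, \<open>w\<^sup>* w\<close> (with \<open>w\<^sup>*\<close> the reversed word with \<open>X\<close> and
  \<open>Y\<close> exchanged) acts nontrivially at a point whose even coordinates are non-integral and whose
  odd coordinates are the states reached along \<open>w\<close> from the start states forced by \<open>w\<close>.\<close>

lemma adjoint_word_act_nonzero:
  assumes w: "word_over m w" and nb: "\<forall>r\<in>{p<..n}. no_bad_block (signed_row \<gamma> r w)"
  shows "\<exists>y. act (word_elt (adjoint_word w @ w)) (\<lambda>y h. 1) y (\<lambda>j. 0) \<noteq> (0 :: 'k::field_char_0)"
proof -
  let ?E = "\<lambda>r. signed_row \<gamma> r w"
  define y :: "nat \<Rightarrow> 'k" where "y = (\<lambda>j. if 1 \<le> j \<and> j \<le> p then 1 / 2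
      else if p < j \<and> j \<le> n then (if alt_state (first_nonzero (?E j) = -1) (?E j) then 1 else 0) else 0)"
  have y: "y \<in> V" using p_le_n by (auto simp: Vset_def y_def)
  have "alternating (y r = 1) (signed_row \<gamma> r (adjoint_word w @ w))" if r: "r \<in> {p<..n}" for r
  proof -
    have "\<gamma> r (snd l) \<in> {0, 1, -1}" if "l \<in> set w" for l
      using gamma_odd_entry[of r "snd l"] r that w by (auto simp: word_over_def)
    then have "set (?E r) \<subseteq> {0, 1, -1}" by (fastforce simp: signed_row_def)
    then have alt: "alternating (first_nonzero (?E r) = -1) (?E r)"
      using nb r by (intro no_bad_block_alternating) auto
    have "y r = 1 \<longleftrightarrow> alt_state (first_nonzero (?E r) = -1) (?E r)" using r by (simp add: y_def)
    then show ?thesis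
      using alternating_rev_uminus[OF alt] alt by (simp add: signed_row_adjoint_word alternating_append)
  qed
  moreover have "word_over m (adjoint_word w)" using w by (auto simp: adjoint_word_def word_over_def)
  moreover have "\<forall>j\<in>{1..p}. y j \<notin> \<int>" by (simp add: y_def half_not_Ints)
  ultimately have "word_weight (adjoint_word w @ w) y (\<lambda>j. 0) \<noteq> 0"
    using w y by (intro alternating_word_weight_nonzero) auto
  then show ?thesis
    using y by (intro exI[of _ y]) (simp add: act_scaled_word act_word_def oneR_apply del: word_weight.simps)
qed

lemma word_elt_notin_Imax:
  assumes w: "word_over m w" and nb: "\<forall>r\<in>{p<..n}. no_bad_block (signed_row \<gamma> r w)"
  shows "word_elt w \<notin> (Imax p n m \<gamma> :: 'k::field_char_0 elt set)"
proof
  assume "word_elt w \<in> (Imax p n m \<gamma> :: 'k elt set)"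
  then obtain K :: "'k elt set" where K: "admissible p n m \<gamma> K" "word_elt w \<in> K" by (auto simp: Imax_def)
  have w': "word_over m (adjoint_word w)" using w by (auto simp: adjoint_word_def word_over_def)
  have "Fmul p n \<gamma> (word_elt (adjoint_word w)) (word_elt w) \<in> K"
    using K word_elt_Fset[OF w'] by (auto simp: admissible_def graded_ideal_def)
  then have "(word_elt (adjoint_word w @ w) :: 'k elt) \<in> K"
    by (simp add: Fmul_scaled_word Rset_oneR sig_word_oneR Rset_mul_oneR)
  moreover have "(word_elt (adjoint_word w @ w) :: 'k elt) \<in> Fhom p n m (\<lambda>i. 0)"
    using word_elt_Fhom[of "adjoint_word w @ w"] w w' by (simp add: wdeg_append wdeg_adjoint_word)
  ultimately have "(word_elt (adjoint_word w @ w) :: 'k elt) \<in> Jgen p n m \<gamma>"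
    using K(1) unfolding admissible_def by blast
  then show False
    using Jgen_act_zero adjoint_word_act_nonzero[OF w nb] by blast
qed

end

theorem mainTheorem9:
  fixes p n m :: nat and \<gamma> :: "nat \<Rightarrow> nat \<Rightarrow> int" and g :: "nat \<Rightarrow> int"
  assumes "alg_closed_type TYPE('k::field_char_0)"
    and "p \<le> n"
    and "gamma_cond_minus p n m \<gamma>"
    and "\<forall>i. i \<notin> {1..m} \<longrightarrow> g i = 0"
  shows "A_comp_nonzero TYPE('k) p n m \<gamma> g \<longleftrightarrow>
    (\<exists>s :: nat list. set s \<subseteq> {1..m} \<and> (\<forall>i\<in>{1..m}. count (mset s) i = nat \<bar>g i\<bar>) \<and>
       (\<forall>r\<in>{p<..n}. no_bad_block (map (\<lambda>i. sgn (g i) * \<gamma> r i) s)))"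
proof -
  interpret gamma_minus p n m \<gamma> using assms(2,3) by unfold_locales
  have "A_comp_nonzero TYPE('k) p n m \<gamma> g \<longleftrightarrow> (\<exists>s. good_sequence p n m \<gamma> g s)"
  proof
    assume "A_comp_nonzero TYPE('k) p n m \<gamma> g"
    then show "\<exists>s. good_sequence p n m \<gamma> g s"
      using hom_subset_act_kernel act_kernel_subset_Imax by (fastforce simp: A_comp_nonzero_def)
  next
    assume "\<exists>s. good_sequence p n m \<gamma> g s"
    then obtain s where s: "good_sequence p n m \<gamma> g s" ..
    let ?w = "map (\<lambda>i. (0 < g i, i)) s"
    note w = good_sequence_word[OF s assms(4)]
    have "word_elt ?w \<in> (Fhom p n m g :: 'k elt set)"
      using word_elt_Fhom[OF w(1)] w(2) by simp
    moreover have "word_elt ?w \<notin> (Imax p n m \<gamma> :: 'k elt set)"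
      using s w by (intro word_elt_notin_Imax) (auto simp: good_sequence_def)
    ultimately show "A_comp_nonzero TYPE('k) p n m \<gamma> g" by (auto simp: A_comp_nonzero_def)
  qed
  then show ?thesis by (simp add: good_sequence_def)
qed

end
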